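(* Let $p\in(0,1/2]$ be a fixed constant. There exist constants $C,c,\delta,\rho\in(0,1)$ depending only on $p$ such that the following holds for all sufficiently large positive integers $d,n$ with $d=pn$. Let $m$ be an integer with $n/2\le m\le n$ and let $M$ be a random $m\times n$ matrix whose rows are independent random vectors, each drawn uniformly from the set of vectors in $\{0,1\}^n$ with exactly $d$ ones. Then \[ \mathbb{P}\left(\inf_{v\in \mathrm{Cons}_{\delta,\rho}}\|Mv\|_2\le c\sqrt{pn}\right)\le e^{-Cn}. \]
   Context: $\mathbb{S}^{n-1}$ is the Euclidean unit sphere in $\mathbb{R}^n$. For $\delta,\rho\in(0,1)$, $\mathrm{Cons}_{\delta,\rho}\subset\mathbb{S}^{n-1}$ ("almost constant vectors") is the set of $v\in\mathbb{S}^{n-1}$ for which there exists a real number $\lambda$ such that $|v_i-\lambda|\le \rho/\sqrt{n}$ holds for at least $(1-\delta)n$ coordinates $i\in\{1,\dots,n\}$. *)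

theory Defs
  imports "HOL-Probability.Probability"
begin

text \<open>Vectors in R^n are represented as functions nat => real that vanish outside {0..<n}.\<close>

definition unit_sphere :: "nat \<Rightarrow> (nat \<Rightarrow> real) set" where
  "unit_sphere n = {v. (\<forall>i\<ge>n. v i = 0) \<and> sqrt (\<Sum>i<n. (v i)\<^sup>2) = 1}"

definition almost_const :: "real \<Rightarrow> real \<Rightarrow> nat \<Rightarrow> (nat \<Rightarrow> real) set" where
  "almost_const \<delta> \<rho> n = {v \<in> unit_sphere n. \<exists>lam::real.
      real (card {i. i < n \<and> \<bar>v i - lam\<bar> \<le> \<rho> / sqrt (real n)}) \<ge> (1 - \<delta>) * real n}"

definition slice_vectors :: "nat \<Rightarrow> nat \<Rightarrow> (nat \<Rightarrow> real) set" where
  "slice_vectors n d = {x. (\<forall>i. x i \<in> {0, 1}) \<and> (\<forall>i\<ge>n. x i = 0) \<and>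
      card {i. i < n \<and> x i = 1} = d}"

text \<open>m x n matrices (as row functions) whose rows lie in slice_vectors n d;
  the uniform distribution on this product set is the law of a matrix with
  independent rows, each uniform on slice_vectors n d.\<close>
definition slice_matrices :: "nat \<Rightarrow> nat \<Rightarrow> nat \<Rightarrow> (nat \<Rightarrow> nat \<Rightarrow> real) set" where
  "slice_matrices m n d = (\<Pi>\<^sub>E i\<in>{..<m}. slice_vectors n d)"

definition random_slice_matrix :: "nat \<Rightarrow> nat \<Rightarrow> nat \<Rightarrow> (nat \<Rightarrow> nat \<Rightarrow> real) pmf" where
  "random_slice_matrix m n d = pmf_of_set (slice_matrices m n d)"

definition matvec_norm :: "nat \<Rightarrow> nat \<Rightarrow> (nat \<Rightarrow> nat \<Rightarrow> real) \<Rightarrow> (nat \<Rightarrow> real) \<Rightarrow> real" where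
  "matvec_norm m n M v = sqrt (\<Sum>i<m. (\<Sum>j<n. M i j * v j)\<^sup>2)"

end

theory Submission
  imports Defs
begin

definition slice_sets :: "nat \<Rightarrow> nat \<Rightarrow> nat set set" where
  "slice_sets n d = {A. A \<subseteq> {..<n} \<and> card A = d}"

lemma finite_slice_sets: "finite (slice_sets n d)"
  unfolding slice_sets_def by (rule finite_subset[of _ "Pow {..<n}"]) auto

lemma card_slice_sets: "card (slice_sets n d) = n choose d"
  unfolding slice_sets_def using n_subsets[of "{..<n}" d] by simp

lemma inj_indicator_real: "inj (indicator :: nat set \<Rightarrow> nat \<Rightarrow> real)"
  by (rule injI) (metis indicator_eq_1_iff subsetI subset_antisym)

lemma slice_vectors_eq_image: "slice_vectors n d = indicator ` slice_sets n d"
proof (intro equalityI subsetI)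
  fix x :: "nat \<Rightarrow> real" assume x: "x \<in> slice_vectors n d"
  let ?A = "{i. i < n \<and> x i = 1}"
  have "x = indicator ?A"
    using x unfolding slice_vectors_def by (force simp: fun_eq_iff split: split_indicator)
  moreover have "?A \<in> slice_sets n d"
    using x unfolding slice_vectors_def slice_sets_def by auto
  ultimately show "x \<in> indicator ` slice_sets n d" by blast
next
  fix x :: "nat \<Rightarrow> real" assume "x \<in> indicator ` slice_sets n d"
  then obtain A where A: "A \<subseteq> {..<n}" "card A = d" and xA: "x = indicator A"
    unfolding slice_sets_def by auto
  have "{i. i < n \<and> indicator A i = (1::real)} = A"
    using A(1) by (auto simp: indicator_eq_1_iff)
  then show "x \<in> slice_vectors n d"
    using A xA unfolding slice_vectors_def by (auto split: split_indicator)
qed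

lemma sum_slice_vectors:
  "(\<Sum>x\<in>slice_vectors n d. f x) = (\<Sum>A\<in>slice_sets n d. f (indicator A))"
  unfolding slice_vectors_eq_image
  by (rule sum.reindex[unfolded comp_def]) (rule inj_on_subset[OF inj_indicator_real], simp)

lemma finite_slice_vectors: "finite (slice_vectors n d)"
  unfolding slice_vectors_eq_image using finite_slice_sets by simp

lemma card_slice_vectors: "card (slice_vectors n d) = n choose d"
  unfolding slice_vectors_eq_image card_slice_sets[symmetric]
  by (rule card_image) (rule inj_on_subset[OF inj_indicator_real], simp)

lemma slice_vector_01: "x \<in> slice_vectors n d \<Longrightarrow> x j = 0 \<or> x j = 1"
  unfolding slice_vectors_def by auto

lemma slice_vector_sum:
  assumes "x \<in> slice_vectors n d"
  shows "(\<Sum>j<n. x j) = real d"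
proof -
  obtain A where A: "A \<subseteq> {..<n}" "card A = d" "x = indicator A"
    using assms unfolding slice_vectors_eq_image slice_sets_def by auto
  then show ?thesis
    using finite_subset[OF A(1)] by (simp add: indicator_def sum.If_cases Int_absorb1)
qed

lemma card_slice_sets_superset:
  assumes T: "T \<subseteq> {..<n}" "card T \<le> d"
  shows "card {A \<in> slice_sets n d. T \<subseteq> A} = (n - card T) choose (d - card T)"
proof -
  have fT: "finite T" using T finite_subset by blast
  let ?B = "{B. B \<subseteq> {..<n} - T \<and> card B = d - card T}"
  have "bij_betw (\<lambda>A. A - T) {A \<in> slice_sets n d. T \<subseteq> A} ?B"
  proof (rule bij_betw_byWitness[where f' = "\<lambda>B. B \<union> T"])
    show "(\<lambda>A. A - T) ` {A \<in> slice_sets n d. T \<subseteq> A} \<subseteq> ?B"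
    proof
      fix B assume "B \<in> (\<lambda>A. A - T) ` {A \<in> slice_sets n d. T \<subseteq> A}"
      then obtain A where A: "A \<subseteq> {..<n}" "card A = d" "T \<subseteq> A" "B = A - T"
        unfolding slice_sets_def by auto
      then have "card (A - T) = d - card T"
        using card_Diff_subset fT finite_subset[OF A(1)] by auto
      then show "B \<in> ?B" using A by auto
    qed
    show "(\<lambda>B. B \<union> T) ` ?B \<subseteq> {A \<in> slice_sets n d. T \<subseteq> A}"
    proof
      fix A assume "A \<in> (\<lambda>B. B \<union> T) ` ?B"
      then obtain B where B: "B \<subseteq> {..<n} - T" "card B = d - card T" "A = B \<union> T" by auto
      then have "card A = d"
        using T fT card_Un_disjoint[of B T] finite_subset[OF B(1)] by auto
      then show "A \<in> {A \<in> slice_sets n d. T \<subseteq> A}" using B T unfolding slice_sets_def by auto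
    qed
  qed auto
  then have "card {A \<in> slice_sets n d. T \<subseteq> A} = card ?B" by (rule bij_betw_same_card)
  also have "\<dots> = card ({..<n} - T) choose (d - card T)" by (rule n_subsets) simp
  also have "card ({..<n} - T) = n - card T" using T fT by (simp add: card_Diff_subset)
  finally show ?thesis .
qed

lemma card_slice_sets_disjoint:
  assumes T: "T \<subseteq> {..<n}"
  shows "card {A \<in> slice_sets n d. A \<inter> T = {}} = (n - card T) choose d"
proof -
  have "{A \<in> slice_sets n d. A \<inter> T = {}} = {B. B \<subseteq> {..<n} - T \<and> card B = d}"
    unfolding slice_sets_def by auto
  then have "card {A \<in> slice_sets n d. A \<inter> T = {}} = card ({..<n} - T) choose d"
    by (simp add: n_subsets)
  also have "card ({..<n} - T) = n - card T"
    using T finite_subset[OF T] by (simp add: card_Diff_subset)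
  finally show ?thesis .
qed

lemma binomial_shift_mult_falling:
  "t \<le> d \<Longrightarrow> d \<le> n \<Longrightarrow>
    ((n - t) choose (d - t)) * (\<Prod>i<t. n - i) = (n choose d) * (\<Prod>i<t. d - i)"
proof (induction t arbitrary: n d)
  case 0 then show ?case by simp
next
  case (Suc t)
  then have IH: "((n - 1 - t) choose (d - 1 - t)) * (\<Prod>i<t. n - 1 - i)
      = ((n - 1) choose (d - 1)) * (\<Prod>i<t. d - 1 - i)"
    using Suc.IH[of "d - 1" "n - 1"] by auto
  have absorb: "d * (n choose d) = n * ((n - 1) choose (d - 1))"
    using binomial_absorption[of "d - 1" n] Suc.prems by simp
  have "((n - Suc t) choose (d - Suc t)) * (\<Prod>i<Suc t. n - i)
      = n * (((n - 1 - t) choose (d - 1 - t)) * (\<Prod>i<t. n - 1 - i))"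
    by (subst prod.lessThan_Suc_shift) simp
  also have "\<dots> = (n choose d) * (d * (\<Prod>i<t. d - 1 - i))"
    using IH absorb by (simp add: ac_simps)
  also have "d * (\<Prod>i<t. d - 1 - i) = (\<Prod>i<Suc t. d - i)"
    by (subst prod.lessThan_Suc_shift) simp
  finally show ?case .
qed

lemma binomial_shift_le:
  assumes "t \<le> d" "d \<le> n" "0 < n"
  shows "real ((n - t) choose (d - t)) \<le> real (n choose d) * (real d / real n) ^ t"
proof -
  have F: "real ((n - t) choose (d - t)) * (\<Prod>i<t. real (n - i))
      = real (n choose d) * (\<Prod>i<t. real (d - i))"
    using binomial_shift_mult_falling[OF assms(1,2)] by (metis of_nat_mult of_nat_prod)
  have pos: "0 < (\<Prod>i<t. real (n - i))" using assms by (intro prod_pos) auto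
  have "(\<Prod>i<t. real (d - i) * real n) \<le> (\<Prod>i<t. real d * real (n - i))"
  proof (rule prod_mono)
    fix i assume "i \<in> {..<t}"
    then have "real (d - i) = real d - real i" "real (n - i) = real n - real i" using assms by auto
    moreover have "real i * real d \<le> real i * real n" using assms by (intro mult_left_mono) auto
    ultimately have "real (d - i) * real n \<le> real d * real (n - i)"
      by (simp add: algebra_simps)
    then show "0 \<le> real (d - i) * real n \<and> real (d - i) * real n \<le> real d * real (n - i)"
      by simp
  qed
  then have "(\<Prod>i<t. real (d - i)) * real n ^ t \<le> real d ^ t * (\<Prod>i<t. real (n - i))"
    by (simp add: prod.distrib)
  then have "real ((n - t) choose (d - t)) * real n ^ t * (\<Prod>i<t. real (n - i))
      \<le> real (n choose d) * real d ^ t * (\<Prod>i<t. real (n - i))"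
    using F by (simp add: ac_simps mult_left_mono)
  then have "real ((n - t) choose (d - t)) * real n ^ t \<le> real (n choose d) * real d ^ t"
    using pos by simp
  then show ?thesis using assms by (simp add: power_divide field_simps)
qed

lemma sum_slice_prod:
  assumes "T \<subseteq> {..<n}"
  shows "(\<Sum>x\<in>slice_vectors n d. \<Prod>j\<in>T. x j) = real (card {A \<in> slice_sets n d. T \<subseteq> A})"
proof -
  have "(\<Prod>j\<in>T. indicator A j) = (if T \<subseteq> A then 1 else (0::real))" for A
    using finite_subset[OF assms] by (induction T rule: finite_induct) auto
  then show ?thesis
    unfolding sum_slice_vectors using finite_slice_sets by (simp add: sum.If_cases Int_def)
qed

lemma sum_slice_prod_compl:
  assumes "T \<subseteq> {..<n}"
  shows "(\<Sum>x\<in>slice_vectors n d. \<Prod>j\<in>T. 1 - x j) = real ((n - card T) choose d)"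
proof -
  have "(\<Prod>j\<in>T. 1 - indicator A j) = (if A \<inter> T = {} then 1 else (0::real))" for A
    using finite_subset[OF assms] by (induction T rule: finite_induct) auto
  then have "(\<Sum>x\<in>slice_vectors n d. \<Prod>j\<in>T. 1 - x j) = real (card {A \<in> slice_sets n d. A \<inter> T = {}})"
    unfolding sum_slice_vectors using finite_slice_sets by (simp add: sum.If_cases Int_def)
  then show ?thesis using card_slice_sets_disjoint[OF assms] by simp
qed

lemma sum_slice_prod_le:
  assumes T: "T \<subseteq> {..<n}" and "d \<le> n" "0 < n"
  shows "(\<Sum>x\<in>slice_vectors n d. \<Prod>j\<in>T. x j) \<le> real (n choose d) * (real d / real n) ^ card T"
proof (cases "card T \<le> d")
  case True
  then show ?thesis
    unfolding sum_slice_prod[OF T] card_slice_sets_superset[OF T True]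
    using binomial_shift_le[OF True assms(2,3)] by simp
next
  case False
  then have none: "{A \<in> slice_sets n d. T \<subseteq> A} = {}"
    unfolding slice_sets_def by (auto dest: card_mono[rotated] intro: finite_subset)
  show ?thesis unfolding sum_slice_prod[OF T] none by simp
qed

lemma sum_slice_prod_compl_le:
  assumes T: "T \<subseteq> {..<n}" and "d \<le> n" "0 < n"
  shows "(\<Sum>x\<in>slice_vectors n d. \<Prod>j\<in>T. 1 - x j) \<le> real (n choose d) * (1 - real d / real n) ^ card T"
proof -
  have "card T \<le> n" using card_mono[OF _ T] by simp
  show ?thesis
  proof (cases "card T \<le> n - d")
    case True
    then have "(n - card T) choose d = (n - card T) choose ((n - card T) - d)"
      using assms(2) by (intro binomial_symmetric) linarith
    then have "(n - card T) choose d = (n - card T) choose ((n - d) - card T)"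
      by (simp add: add.commute)
    moreover have "n choose d = n choose (n - d)" using assms(2) binomial_symmetric by blast
    moreover have "1 - real d / real n = real (n - d) / real n" using assms by (simp add: field_simps)
    ultimately show ?thesis
      unfolding sum_slice_prod_compl[OF T] using binomial_shift_le[OF True _ assms(3)] by simp
  next
    case False
    then have "(n - card T) choose d = 0" using \<open>card T \<le> n\<close> by simp
    then show ?thesis unfolding sum_slice_prod_compl[OF T] using assms by (simp del: binomial_eq_0_iff)
  qed
qed

lemma sum_slice_coord:
  assumes "j < n" "1 \<le> d" "d \<le> n"
  shows "(\<Sum>x\<in>slice_vectors n d. x j) = real (n choose d) * real d / real n"
proof -
  have "(\<Sum>x\<in>slice_vectors n d. x j) = real ((n - 1) choose (d - 1))"
    using sum_slice_prod[of "{j}" n d] card_slice_sets_superset[of "{j}" n d] assms by simp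
  moreover have "real ((n - 1) choose (d - 1)) * real n = real (n choose d) * real d"
    using binomial_shift_mult_falling[of 1 d n] assms by (simp flip: of_nat_mult)
  ultimately show ?thesis using assms by (simp add: field_simps)
qed

lemma sum_slice_coord_pair:
  assumes "j < n" "k < n" "j \<noteq> k" "2 \<le> d" "d \<le> n"
  shows "(\<Sum>x\<in>slice_vectors n d. x j * x k)
    = real (n choose d) * (real d * (real d - 1)) / (real n * (real n - 1))"
proof -
  have "((n - 2) choose (d - 2)) * ((n - 1) * n) = (n choose d) * ((d - 1) * d)"
    using binomial_shift_mult_falling[of 2 d n] assms by (simp add: numeral_2_eq_2 lessThan_Suc)
  then have "real ((n - 2) choose (d - 2)) * (real (n - 1) * real n)
      = real (n choose d) * (real (d - 1) * real d)"
    by (metis of_nat_mult)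
  moreover have "real (n - 1) = real n - 1" "real (d - 1) = real d - 1" "(real n - 1) * real n \<noteq> 0"
    using assms by auto
  ultimately have "real ((n - 2) choose (d - 2))
      = real (n choose d) * ((real d - 1) * real d) / ((real n - 1) * real n)"
    by (simp add: eq_divide_eq)
  moreover have "(\<Sum>x\<in>slice_vectors n d. x j * x k) = real ((n - 2) choose (d - 2))"
    using sum_slice_prod[of "{j, k}" n d] card_slice_sets_superset[of "{j, k}" n d] assms
    by (simp add: numeral_2_eq_2)
  ultimately show ?thesis by (simp add: mult.commute)
qed

definition centered_sum :: "nat \<Rightarrow> real \<Rightarrow> (nat \<Rightarrow> real) \<Rightarrow> (nat \<Rightarrow> real) \<Rightarrow> real" where
  "centered_sum n p b x = (\<Sum>j<n. b j * (x j - p))"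

lemma centered_sum_eq: "centered_sum n p b x = (\<Sum>j<n. b j * x j) - p * (\<Sum>j<n. b j)"
  unfolding centered_sum_def by (simp add: algebra_simps sum_subtractf sum_distrib_left)

lemma centered_sum_diff:
  "centered_sum n p (\<lambda>j. f j - g j) x = centered_sum n p f x - centered_sum n p g x"
  unfolding centered_sum_def sum_subtractf[symmetric] by (rule sum.cong) (auto simp: algebra_simps)

lemma exp_le_quadratic:
  fixes a :: real
  assumes "\<bar>a\<bar> \<le> 1"
  shows "exp a \<le> 1 + a + a\<^sup>2"
proof (cases "0 \<le> a")
  case True
  then show ?thesis using exp_bound[of a] assms by auto
next
  case False
  define c where "c = - a"
  have c: "0 \<le> c" "c \<le> 1" using False assms c_def by auto
  have "1 \<le> (1 - c + c\<^sup>2) * (1 + c)"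
    using c by (simp add: algebra_simps power2_eq_square power3_eq_cube)
  also have "\<dots> \<le> (1 - c + c\<^sup>2) * exp c"
    using c by (intro mult_left_mono) (auto simp: power2_eq_square)
  finally have "exp (- c) \<le> 1 - c + c\<^sup>2"
    by (simp add: exp_minus divide_le_eq field_simps)
  then show ?thesis using c_def by simp
qed

lemma bernoulli_mgf_le:
  fixes r a :: real
  assumes "0 \<le> r" "r \<le> 1" "\<bar>a\<bar> \<le> 1"
  shows "(1 + r * (exp a - 1)) * exp (- (r * a)) \<le> exp (a\<^sup>2)"
proof -
  have "(1 + r * (exp a - 1)) * exp (- (r * a)) \<le> exp (r * (exp a - 1)) * exp (- (r * a))"
    by (intro mult_right_mono) auto
  also have "\<dots> = exp (r * (exp a - 1 - a))" by (simp add: exp_add[symmetric] algebra_simps)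
  also have "r * (exp a - 1 - a) \<le> 1 * (exp a - 1 - a)"
    using assms exp_ge_add_one_self[of a] by (intro mult_right_mono) linarith+
  also have "1 * (exp a - 1 - a) \<le> a\<^sup>2" using exp_le_quadratic[OF assms(3)] by simp
  finally show ?thesis by simp
qed

lemma sum_prod_one_plus_le:
  fixes y :: "'a \<Rightarrow> 'b \<Rightarrow> real"
  assumes "finite J" "\<And>j. j \<in> J \<Longrightarrow> 0 \<le> e j"
    and moments: "\<And>T. T \<subseteq> J \<Longrightarrow> (\<Sum>x\<in>S. \<Prod>j\<in>T. y x j) \<le> N * r ^ card T"
  shows "(\<Sum>x\<in>S. \<Prod>j\<in>J. 1 + e j * y x j) \<le> N * (\<Prod>j\<in>J. 1 + r * e j)"
proof -
  have expand: "(\<Prod>j\<in>J. 1 + f j) = (\<Sum>T\<in>Pow J. \<Prod>j\<in>T. f j)" for f :: "'b \<Rightarrow> real"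
    using prod_add[OF assms(1), of f "\<lambda>_. 1"] by (simp add: add.commute)
  have "(\<Sum>x\<in>S. \<Prod>j\<in>J. 1 + e j * y x j)
      = (\<Sum>x\<in>S. \<Sum>T\<in>Pow J. (\<Prod>j\<in>T. e j) * (\<Prod>j\<in>T. y x j))"
    by (simp add: expand prod.distrib)
  also have "\<dots> = (\<Sum>T\<in>Pow J. (\<Prod>j\<in>T. e j) * (\<Sum>x\<in>S. \<Prod>j\<in>T. y x j))"
    by (subst sum.swap) (simp add: sum_distrib_left)
  also have "\<dots> \<le> (\<Sum>T\<in>Pow J. (\<Prod>j\<in>T. e j) * (N * r ^ card T))"
    using assms by (intro sum_mono mult_left_mono prod_nonneg) auto
  also have "\<dots> = N * (\<Sum>T\<in>Pow J. \<Prod>j\<in>T. r * e j)"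
    by (simp add: sum_distrib_left prod.distrib ac_simps)
  also have "\<dots> = N * (\<Prod>j\<in>J. 1 + r * e j)" by (simp add: expand)
  finally show ?thesis .
qed

lemma mgf_le_of_moments:
  fixes y :: "'a \<Rightarrow> 'b \<Rightarrow> real"
  assumes "finite J"
    and y01: "\<And>x j. x \<in> S \<Longrightarrow> j \<in> J \<Longrightarrow> y x j = 0 \<or> y x j = 1"
    and moments: "\<And>T. T \<subseteq> J \<Longrightarrow> (\<Sum>x\<in>S. \<Prod>j\<in>T. y x j) \<le> N * r ^ card T"
    and "0 \<le> r" "r \<le> 1" "0 \<le> u" "\<And>j. j \<in> J \<Longrightarrow> 0 \<le> b j" "\<And>j. j \<in> J \<Longrightarrow> u * b j \<le> 1"
  shows "(\<Sum>x\<in>S. exp (u * (\<Sum>j\<in>J. b j * (y x j - r)))) \<le> N * exp (u\<^sup>2 * (\<Sum>j\<in>J. (b j)\<^sup>2))"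
proof -
  define e where "e j = exp (u * b j) - 1" for j
  define P where "P = (\<Prod>j\<in>J. exp (- (r * (u * b j))))"
  have N0: "0 \<le> N" using moments[of "{}"] by (simp add: order_trans[OF of_nat_0_le_iff])
  have "exp (u * (\<Sum>j\<in>J. b j * (y x j - r))) = (\<Prod>j\<in>J. 1 + e j * y x j) * P" if "x \<in> S" for x
  proof -
    have "exp (u * (\<Sum>j\<in>J. b j * (y x j - r))) = (\<Prod>j\<in>J. exp (u * b j * y x j) * exp (- (r * (u * b j))))"
      by (simp add: sum_distrib_left exp_sum[OF assms(1), symmetric] exp_add[symmetric] algebra_simps)
    also have "\<dots> = (\<Prod>j\<in>J. (1 + e j * y x j) * exp (- (r * (u * b j))))"
    proof (rule prod.cong[OF refl])
      fix j assume "j \<in> J"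
      then show "exp (u * b j * y x j) * exp (- (r * (u * b j))) = (1 + e j * y x j) * exp (- (r * (u * b j)))"
        using y01[OF that \<open>j \<in> J\<close>] unfolding e_def by auto
    qed
    finally show ?thesis unfolding P_def by (simp add: prod.distrib)
  qed
  then have "(\<Sum>x\<in>S. exp (u * (\<Sum>j\<in>J. b j * (y x j - r)))) = (\<Sum>x\<in>S. \<Prod>j\<in>J. 1 + e j * y x j) * P"
    by (simp add: sum_distrib_right)
  also have "\<dots> \<le> N * (\<Prod>j\<in>J. 1 + r * e j) * P"
    using assms unfolding P_def e_def
    by (intro mult_right_mono sum_prod_one_plus_le prod_nonneg) auto
  also have "\<dots> = N * (\<Prod>j\<in>J. (1 + r * (exp (u * b j) - 1)) * exp (- (r * (u * b j))))"
    unfolding P_def e_def by (simp add: prod.distrib)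
  also have "\<dots> \<le> N * (\<Prod>j\<in>J. exp ((u * b j)\<^sup>2))"
    using assms N0 by (intro mult_left_mono prod_mono conjI bernoulli_mgf_le)
      (auto simp: mult_nonneg_nonneg)
  also have "\<dots> = N * exp (u\<^sup>2 * (\<Sum>j\<in>J. (b j)\<^sup>2))"
    by (simp add: exp_sum[OF assms(1)] sum_distrib_left power_mult_distrib)
  finally show ?thesis .
qed

lemma slice_mgf_le:
  assumes "d \<le> n" "0 < n" "\<And>j. j < n \<Longrightarrow> 0 \<le> b j" "\<And>j. j < n \<Longrightarrow> \<bar>u * b j\<bar> \<le> 1"
  shows "(\<Sum>x\<in>slice_vectors n d. exp (u * centered_sum n (real d / real n) b x))
    \<le> real (n choose d) * exp (u\<^sup>2 * (\<Sum>j<n. (b j)\<^sup>2))"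
proof -
  define p where "p = real d / real n"
  have p: "0 \<le> p" "p \<le> 1" using assms unfolding p_def by auto
  show ?thesis
  proof (cases "0 \<le> u")
    case True
    have "(\<Sum>x\<in>slice_vectors n d. exp (u * (\<Sum>j<n. b j * (x j - p))))
        \<le> real (n choose d) * exp (u\<^sup>2 * (\<Sum>j<n. (b j)\<^sup>2))"
      using assms p True unfolding p_def
      by (intro mgf_le_of_moments sum_slice_prod_le slice_vector_01) (auto simp: abs_le_iff)
    then show ?thesis unfolding centered_sum_def p_def .
  next
    case False
    have "(\<Sum>j<n. b j * ((1 - x j) - (1 - p))) = - (\<Sum>j<n. b j * (x j - p))" for x
      unfolding sum_negf[symmetric] by (simp add: algebra_simps)
    then have "u * (\<Sum>j<n. b j * (x j - p)) = (- u) * (\<Sum>j<n. b j * ((1 - x j) - (1 - p)))" for x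
      by simp
    moreover have "(\<Sum>x\<in>slice_vectors n d. exp ((- u) * (\<Sum>j<n. b j * ((1 - x j) - (1 - p)))))
        \<le> real (n choose d) * exp ((- u)\<^sup>2 * (\<Sum>j<n. (b j)\<^sup>2))"
      using assms p False unfolding p_def
      by (intro mgf_le_of_moments sum_slice_prod_compl_le)
        (auto simp: abs_le_iff dest: slice_vector_01[where j = j for j])
    ultimately show ?thesis unfolding centered_sum_def p_def by simp
  qed
qed

lemma exp_abs_le: "exp \<bar>z::real\<bar> \<le> exp z + exp (- z)"
  by (cases "0 \<le> z") (simp_all add: add_increasing add_increasing2)

lemma exp_add_le_mean: "exp ((a::real) + c) \<le> (exp (2 * a) + exp (2 * c)) / 2"
proof -
  have "2 * (exp a * exp c) \<le> (exp a)\<^sup>2 + (exp c)\<^sup>2"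
    using zero_le_power2[of "exp a - exp c"] by (simp add: power2_diff)
  moreover have "(exp a)\<^sup>2 = exp (2 * a)" "(exp c)\<^sup>2 = exp (2 * c)"
    by (simp_all add: power2_eq_square exp_add[symmetric])
  ultimately show ?thesis by (simp add: exp_add)
qed

lemma slice_mgf_abs_nonneg_le:
  assumes "d \<le> n" "0 < n" "0 \<le> v" "\<And>j. j < n \<Longrightarrow> 0 \<le> c j" "\<And>j. j < n \<Longrightarrow> v * c j \<le> 1"
  shows "(\<Sum>x\<in>slice_vectors n d. exp (v * \<bar>centered_sum n (real d / real n) c x\<bar>))
    \<le> 2 * real (n choose d) * exp (v\<^sup>2 * (\<Sum>j<n. (c j)\<^sup>2))"
proof -
  let ?S = "slice_vectors n d" and ?Y = "centered_sum n (real d / real n) c"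
  have "(\<Sum>x\<in>?S. exp (v * \<bar>?Y x\<bar>)) \<le> (\<Sum>x\<in>?S. exp (v * ?Y x) + exp ((- v) * ?Y x))"
    using assms(3) by (intro sum_mono) (metis exp_abs_le abs_mult abs_of_nonneg mult_minus_left)
  also have "\<dots> = (\<Sum>x\<in>?S. exp (v * ?Y x)) + (\<Sum>x\<in>?S. exp ((- v) * ?Y x))"
    by (rule sum.distrib)
  also have "\<dots> \<le> real (n choose d) * exp (v\<^sup>2 * (\<Sum>j<n. (c j)\<^sup>2))
      + real (n choose d) * exp ((- v)\<^sup>2 * (\<Sum>j<n. (c j)\<^sup>2))"
    using assms mult_nonneg_nonneg[OF assms(3) assms(4)]
    by (intro add_mono slice_mgf_le) (auto simp: abs_mult)
  finally show ?thesis by simp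
qed

lemma slice_mgf_abs_le:
  assumes "d \<le> n" "0 < n" "0 \<le> u" "\<And>j. j < n \<Longrightarrow> 2 * u * \<bar>b j\<bar> \<le> 1"
  shows "(\<Sum>x\<in>slice_vectors n d. exp (u * \<bar>centered_sum n (real d / real n) b x\<bar>))
    \<le> 2 * real (n choose d) * exp (4 * u\<^sup>2 * (\<Sum>j<n. (b j)\<^sup>2))"
proof -
  let ?S = "slice_vectors n d" and ?Y = "centered_sum n (real d / real n)"
  and ?B = "2 * real (n choose d) * exp (4 * u\<^sup>2 * (\<Sum>j<n. (b j)\<^sup>2))"
  define bp where "bp j = max (b j) 0" for j
  define bm where "bm j = max (- b j) 0" for j
  have split: "b = (\<lambda>j. bp j - bm j)" unfolding bp_def bm_def by (auto simp: max_def)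
  have part_le: "(\<Sum>x\<in>?S. exp (2 * u * \<bar>?Y c x\<bar>)) \<le> ?B"
    if c: "\<And>j. 0 \<le> c j \<and> c j \<le> \<bar>b j\<bar>" for c
  proof -
    have "(\<Sum>x\<in>?S. exp (2 * u * \<bar>?Y c x\<bar>)) \<le> 2 * real (n choose d) * exp ((2 * u)\<^sup>2 * (\<Sum>j<n. (c j)\<^sup>2))"
    proof (rule slice_mgf_abs_nonneg_le)
      fix j assume "j < n"
      then show "2 * u * c j \<le> 1"
        using c[of j] assms(3,4) order_trans[OF mult_left_mono] by (metis zero_le_numeral mult_nonneg_nonneg)
    qed (use assms c in auto)
    also have "(\<Sum>j<n. (c j)\<^sup>2) \<le> (\<Sum>j<n. (b j)\<^sup>2)"
      using c by (intro sum_mono) (metis abs_le_square_iff abs_of_nonneg)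
    then have "2 * real (n choose d) * exp ((2 * u)\<^sup>2 * (\<Sum>j<n. (c j)\<^sup>2)) \<le> ?B"
      by (intro mult_left_mono) (auto simp: power_mult_distrib intro!: mult_left_mono)
    finally show ?thesis .
  qed
  have "(\<Sum>x\<in>?S. exp (u * \<bar>?Y b x\<bar>))
      \<le> (\<Sum>x\<in>?S. (exp (2 * u * \<bar>?Y bp x\<bar>) + exp (2 * u * \<bar>?Y bm x\<bar>)) / 2)"
  proof (rule sum_mono)
    fix x
    have "u * \<bar>?Y b x\<bar> \<le> u * \<bar>?Y bp x\<bar> + u * \<bar>?Y bm x\<bar>"
      using assms(3) by (subst split, subst centered_sum_diff)
        (simp add: distrib_left[symmetric] mult_left_mono abs_triangle_ineq4)
    then have "exp (u * \<bar>?Y b x\<bar>) \<le> exp (u * \<bar>?Y bp x\<bar> + u * \<bar>?Y bm x\<bar>)" by simp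
    also have "\<dots> \<le> (exp (2 * u * \<bar>?Y bp x\<bar>) + exp (2 * u * \<bar>?Y bm x\<bar>)) / 2"
      using exp_add_le_mean[of "u * \<bar>?Y bp x\<bar>" "u * \<bar>?Y bm x\<bar>"] by (simp add: mult.assoc)
    finally show "exp (u * \<bar>?Y b x\<bar>) \<le> (exp (2 * u * \<bar>?Y bp x\<bar>) + exp (2 * u * \<bar>?Y bm x\<bar>)) / 2" .
  qed
  also have "\<dots> = ((\<Sum>x\<in>?S. exp (2 * u * \<bar>?Y bp x\<bar>)) + (\<Sum>x\<in>?S. exp (2 * u * \<bar>?Y bm x\<bar>))) / 2"
    by (simp add: sum.distrib sum_divide_distrib[symmetric])
  also have "\<dots> \<le> ?B"
  proof -
    have "0 \<le> bp j \<and> bp j \<le> \<bar>b j\<bar>" "0 \<le> bm j \<and> bm j \<le> \<bar>b j\<bar>" for j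
      unfolding bp_def bm_def by auto
    then show ?thesis using part_le[of bp] part_le[of bm] by simp
  qed
  finally show ?thesis .
qed

lemma slice_sum_centered_sum:
  assumes "1 \<le> d" "d \<le> n"
  shows "(\<Sum>x\<in>slice_vectors n d. centered_sum n (real d / real n) b x) = 0"
proof -
  have "(\<Sum>x\<in>slice_vectors n d. centered_sum n (real d / real n) b x)
      = (\<Sum>j<n. b j * ((\<Sum>x\<in>slice_vectors n d. x j) - real (n choose d) * (real d / real n)))"
    unfolding centered_sum_def
    by (subst sum.swap) (simp add: sum_distrib_left sum_subtractf algebra_simps card_slice_vectors)
  also have "\<dots> = 0" using sum_slice_coord[OF _ assms] by simp
  finally show ?thesis .
qed

lemma slice_covariance:
  assumes "2 \<le> d" "d < n" "j < n" "k < n"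
  defines "p \<equiv> real d / real n"
  shows "(\<Sum>x\<in>slice_vectors n d. (x j - p) * (x k - p))
    = real (n choose d) * (p * (1 - p)) * ((if j = k then real n else 0) - 1) / (real n - 1)"
proof -
  let ?S = "slice_vectors n d" and ?N = "real (n choose d)"
  have n1: "real n - 1 > 0" using assms by simp
  have coord: "(\<Sum>x\<in>?S. x i) = ?N * p" if "i < n" for i
    using sum_slice_coord[of i n d] that assms unfolding p_def by simp
  show ?thesis
  proof (cases "j = k")
    case True
    have "(x j - p) * (x k - p) = (1 - 2 * p) * x j + p\<^sup>2" if "x \<in> ?S" for x
      using slice_vector_01[OF that, of j] True by (auto simp: power2_eq_square algebra_simps)
    then have "(\<Sum>x\<in>?S. (x j - p) * (x k - p)) = (\<Sum>x\<in>?S. (1 - 2 * p) * x j + p\<^sup>2)"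
      by (rule sum.cong[OF refl])
    also have "\<dots> = (1 - 2 * p) * (?N * p) + ?N * p\<^sup>2"
      by (simp add: sum.distrib sum_distrib_left[symmetric] coord[OF assms(3)] card_slice_vectors)
    also have "\<dots> = ?N * (p * (1 - p)) * ((if j = k then real n else 0) - 1) / (real n - 1)"
      using True n1 by (simp add: field_simps power2_eq_square)
    finally show ?thesis .
  next
    case False
    have "(\<Sum>x\<in>?S. (x j - p) * (x k - p))
        = (\<Sum>x\<in>?S. x j * x k) - p * (\<Sum>x\<in>?S. x j) - p * (\<Sum>x\<in>?S. x k) + ?N * p\<^sup>2"
      by (simp add: algebra_simps sum.distrib sum_subtractf sum_distrib_left card_slice_vectors
          power2_eq_square)
    also have "\<dots> = ?N * (real d * (real d - 1)) / (real n * (real n - 1)) - 2 * p * (?N * p) + ?N * p\<^sup>2"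
      using sum_slice_coord_pair[OF assms(3,4) False assms(1)] assms coord by simp
    also have "\<dots> = ?N * (p * (1 - p)) * ((if j = k then real n else 0) - 1) / (real n - 1)"
      using False n1 assms unfolding p_def by (simp add: field_simps power2_eq_square)
    finally show ?thesis .
  qed
qed

lemma slice_sum_centered_sum_sq:
  assumes "2 \<le> d" "d < n"
  defines "p \<equiv> real d / real n"
  shows "(\<Sum>x\<in>slice_vectors n d. (centered_sum n p b x)\<^sup>2)
    = real (n choose d) * (p * (1 - p)) * (real n * (\<Sum>j<n. (b j)\<^sup>2) - (\<Sum>j<n. b j)\<^sup>2) / (real n - 1)"
proof -
  let ?S = "slice_vectors n d"
  define c where "c = real (n choose d) * (p * (1 - p)) / (real n - 1)"
  have "(\<Sum>x\<in>?S. (centered_sum n p b x)\<^sup>2)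
      = (\<Sum>x\<in>?S. \<Sum>j<n. \<Sum>k<n. (b j * b k) * ((x j - p) * (x k - p)))"
    unfolding centered_sum_def power2_eq_square sum_product by (simp add: ac_simps)
  also have "\<dots> = (\<Sum>j<n. \<Sum>k<n. \<Sum>x\<in>?S. (b j * b k) * ((x j - p) * (x k - p)))"
    by (subst sum.swap) (simp add: sum.swap[of _ ?S])
  also have "\<dots> = (\<Sum>j<n. \<Sum>k<n. (b j * b k) * (\<Sum>x\<in>?S. (x j - p) * (x k - p)))"
    by (simp add: sum_distrib_left)
  also have "\<dots> = (\<Sum>j<n. \<Sum>k<n. (b j * b k) * (c * ((if j = k then real n else 0) - 1)))"
    using slice_covariance[OF assms(1,2)] unfolding p_def c_def by (intro sum.cong refl) simp
  also have "\<dots> = (\<Sum>j<n. c * real n * (b j)\<^sup>2 - c * (b j * (\<Sum>k<n. b k)))"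
  proof (rule sum.cong[OF refl])
    fix j assume j: "j \<in> {..<n}"
    have "(\<Sum>k<n. (b j * b k) * (c * ((if j = k then real n else 0) - 1)))
        = (\<Sum>k<n. (if j = k then c * real n * (b j)\<^sup>2 else 0) - c * (b j * b k))"
      by (rule sum.cong[OF refl]) (auto simp: power2_eq_square algebra_simps)
    also have "\<dots> = c * real n * (b j)\<^sup>2 - c * (b j * (\<Sum>k<n. b k))"
      using j by (simp add: sum_subtractf sum_distrib_left)
    finally show "(\<Sum>k<n. (b j * b k) * (c * ((if j = k then real n else 0) - 1)))
        = c * real n * (b j)\<^sup>2 - c * (b j * (\<Sum>k<n. b k))" .
  qed
  also have "\<dots> = c * (real n * (\<Sum>j<n. (b j)\<^sup>2) - (\<Sum>j<n. b j)\<^sup>2)"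
    by (simp add: sum_subtractf sum_distrib_left power2_eq_square sum_distrib_right
        right_diff_distrib mult.assoc mult.commute[of "b _" "b _"])
  finally show ?thesis unfolding c_def by simp
qed

lemma power4_le_exp: "0 \<le> (w::real) \<Longrightarrow> w ^ 4 \<le> 256 * exp w"
proof -
  assume w: "0 \<le> w"
  have "w / 4 \<le> exp (w / 4)" using exp_ge_add_one_self[of "w / 4"] by linarith
  then have "(w / 4) ^ 4 \<le> exp (w / 4) ^ 4" using w by (intro power_mono) auto
  also have "exp (w / 4) ^ 4 = exp w" by (simp add: exp_of_nat_mult[symmetric])
  finally show ?thesis by (simp add: power_divide divide_le_eq)
qed

lemma slice_sum_centered_sum_power4:
  assumes "d \<le> n" "0 < n" "0 < (\<Sum>j<n. (b j)\<^sup>2)"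
  shows "(\<Sum>x\<in>slice_vectors n d. (centered_sum n (real d / real n) b x) ^ 4)
    \<le> 24576 * (\<Sum>j<n. (b j)\<^sup>2)\<^sup>2 * real (n choose d)"
proof -
  define s where "s = (\<Sum>j<n. (b j)\<^sup>2)"
  define u where "u = 1 / (2 * sqrt s)"
  let ?Y = "centered_sum n (real d / real n) b"
  have s: "0 < s" using assms unfolding s_def by simp
  have u0: "0 < u" using s unfolding u_def by simp
  have "2 * u * \<bar>b j\<bar> \<le> 1" if "j < n" for j
  proof -
    have "(b j)\<^sup>2 \<le> s" unfolding s_def using that by (intro member_le_sum) auto
    then have "\<bar>b j\<bar> \<le> sqrt s" using real_le_rsqrt by (simp add: real_sqrt_abs[symmetric] del: real_sqrt_abs)
    then show ?thesis using s unfolding u_def by (simp add: field_simps)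
  qed
  then have mgf: "(\<Sum>x\<in>slice_vectors n d. exp (u * \<bar>?Y x\<bar>)) \<le> 2 * real (n choose d) * exp 1"
    using slice_mgf_abs_le[OF assms(1,2) less_imp_le[OF u0], of b] s
    unfolding s_def[symmetric] u_def by (simp add: power_divide power_mult_distrib)
  have u4: "u ^ 4 = 1 / (16 * s\<^sup>2)"
    unfolding u_def using s by (simp add: power_divide power_mult_distrib power4_eq_xxxx power2_eq_square)
  have "(?Y x) ^ 4 \<le> 4096 * s\<^sup>2 * exp (u * \<bar>?Y x\<bar>)" for x
  proof -
    have "u ^ 4 * (?Y x) ^ 4 \<le> 256 * exp (u * \<bar>?Y x\<bar>)"
      using power4_le_exp[of "u * \<bar>?Y x\<bar>"] u0 by (simp add: power_mult_distrib power_abs)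
    then show ?thesis using s unfolding u4 by (simp add: field_simps)
  qed
  then have "(\<Sum>x\<in>slice_vectors n d. (?Y x) ^ 4) \<le> 4096 * s\<^sup>2 * (\<Sum>x\<in>slice_vectors n d. exp (u * \<bar>?Y x\<bar>))"
    by (simp add: sum_distrib_left sum_mono)
  also have "\<dots> \<le> 4096 * s\<^sup>2 * (2 * real (n choose d) * exp 1)"
    using mgf by (intro mult_left_mono) auto
  also have "\<dots> \<le> 4096 * s\<^sup>2 * (2 * real (n choose d) * 3)"
    using exp_le by (intro mult_left_mono) auto
  finally show ?thesis unfolding s_def by simp
qed

lemma card_threshold_le_sum:
  assumes "finite S" "\<And>x. x \<in> S \<Longrightarrow> 0 \<le> f x"
  shows "a * real (card {x \<in> S. a \<le> f x}) \<le> (\<Sum>x\<in>S. f x)"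
proof -
  have "a * real (card {x \<in> S. a \<le> f x}) = (\<Sum>x\<in>{x \<in> S. a \<le> f x}. a)" by simp
  also have "\<dots> \<le> (\<Sum>x\<in>{x \<in> S. a \<le> f x}. f x)" by (rule sum_mono) simp
  also have "\<dots> \<le> (\<Sum>x\<in>S. f x)" using assms by (intro sum_mono2) auto
  finally show ?thesis .
qed

lemma sum_sq_le_threshold:
  fixes W :: "'a \<Rightarrow> real"
  assumes "finite S" "0 < R" "0 \<le> \<theta>"
  shows "(\<Sum>x\<in>S. (W x)\<^sup>2)
    \<le> \<theta> * real (card S) + R * real (card {x \<in> S. \<theta> \<le> (W x)\<^sup>2}) + (\<Sum>x\<in>S. (W x) ^ 4) / R"
proof -
  have "(W x)\<^sup>2 \<le> \<theta> + R * (if \<theta> \<le> (W x)\<^sup>2 then 1 else 0) + (W x) ^ 4 / R" for x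
  proof -
    have w4: "(W x) ^ 4 = (W x)\<^sup>2 * (W x)\<^sup>2" by (simp add: power4_eq_xxxx power2_eq_square)
    have nonneg: "0 \<le> (W x) ^ 4 / R" unfolding w4 using assms by simp
    have key: "(W x)\<^sup>2 \<le> R + (W x) ^ 4 / R"
    proof (cases "R < (W x)\<^sup>2")
      case True
      then have "(W x)\<^sup>2 * R \<le> (W x)\<^sup>2 * (W x)\<^sup>2" by (intro mult_left_mono) auto
      then have "(W x)\<^sup>2 \<le> (W x) ^ 4 / R" unfolding w4 using assms by (simp add: pos_le_divide_eq)
      then show ?thesis using assms by linarith
    qed (use nonneg in linarith)
    show ?thesis
    proof (cases "\<theta> \<le> (W x)\<^sup>2")
      case True
      then show ?thesis using key assms by simp
    qed (use nonneg in simp)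
  qed
  then have "(\<Sum>x\<in>S. (W x)\<^sup>2) \<le> (\<Sum>x\<in>S. \<theta> + R * (if \<theta> \<le> (W x)\<^sup>2 then 1 else 0) + (W x) ^ 4 / R)"
    by (rule sum_mono)
  also have "\<dots> = \<theta> * real (card S) + R * (\<Sum>x\<in>S. if \<theta> \<le> (W x)\<^sup>2 then 1 else 0)
      + (\<Sum>x\<in>S. (W x) ^ 4) / R"
    by (simp add: sum.distrib sum_distrib_left sum_divide_distrib)
  also have "(\<Sum>x\<in>S. if \<theta> \<le> (W x)\<^sup>2 then 1 else 0) = real (card {x \<in> S. \<theta> \<le> (W x)\<^sup>2})"
    using assms(1) by (simp add: sum.If_cases Int_def)
  finally show ?thesis .
qed

lemma bernoulli_variance_le:
  fixes p :: real
  assumes "0 \<le> p" "p \<le> 1"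
  shows "0 \<le> p * (1 - p)" "p * (1 - p) \<le> 1/4"
proof -
  show "0 \<le> p * (1 - p)" using assms by simp
  show "p * (1 - p) \<le> 1/4"
    using zero_le_power2[of "2 * p - 1"] by (simp add: power2_eq_square algebra_simps)
qed

lemma slice_sum_centered_sum_sq_bounds:
  assumes "2 \<le> d" "d < n" and s: "1/4 \<le> (\<Sum>j<n. (b j)\<^sup>2)" and sum: "(\<Sum>j<n. b j)\<^sup>2 \<le> real n / 64"
  defines "p \<equiv> real d / real n"
  shows "7/8 * (p * (1 - p)) * (\<Sum>j<n. (b j)\<^sup>2) * real (n choose d)
      \<le> (\<Sum>x\<in>slice_vectors n d. (centered_sum n p b x)\<^sup>2)"
    and "(\<Sum>x\<in>slice_vectors n d. (centered_sum n p b x)\<^sup>2) \<le> (\<Sum>j<n. (b j)\<^sup>2) * real (n choose d) / 2"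
proof -
  define N where "N = real (n choose d)"
  define q where "q = p * (1 - p)"
  define s where "s = (\<Sum>j<n. (b j)\<^sup>2)"
  define V where "V = (real n * s - (\<Sum>j<n. b j)\<^sup>2) / (real n - 1)"
  have N: "0 < N" unfolding N_def using assms by simp
  have q: "0 \<le> q" "q \<le> 1/4"
    unfolding q_def p_def using assms by (intro bernoulli_variance_le; simp)+
  have n2: "2 \<le> real n" using assms by simp
  have eq: "(\<Sum>x\<in>slice_vectors n d. (centered_sum n p b x)\<^sup>2) = N * q * V"
    using slice_sum_centered_sum_sq[OF assms(1,2), of b] unfolding N_def q_def V_def s_def p_def by simp
  have "real n * (1/4) \<le> real n * s" using s unfolding s_def by (intro mult_left_mono) auto
  moreover have "15/16 * (real n - 1) * s = 15/16 * (real n * s) - 15/16 * s" by (simp add: field_simps)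
  ultimately have "15/16 * (real n - 1) * s \<le> real n * s - (\<Sum>j<n. b j)\<^sup>2"
    using sum s[folded s_def] by linarith
  then have "15/16 * s \<le> V" unfolding V_def using n2 by (simp add: field_simps)
  then have "N * q * (7/8 * s) \<le> N * q * V"
    using N q s unfolding s_def by (intro mult_left_mono) auto
  then show "7/8 * q * s * N \<le> (\<Sum>x\<in>slice_vectors n d. (centered_sum n p b x)\<^sup>2)"
    unfolding eq by (simp add: ac_simps)
  have "s * 2 \<le> s * real n" using s n2 unfolding s_def by (intro mult_left_mono) auto
  then have "real n * s - (\<Sum>j<n. b j)\<^sup>2 \<le> 2 * s * (real n - 1)"
    by (simp add: algebra_simps) (use zero_le_power2[of "\<Sum>j<n. b j"] in linarith)
  then have "V \<le> 2 * s" unfolding V_def using n2 by (simp add: divide_le_eq)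
  moreover have "0 \<le> V"
    unfolding V_def using n2 sum \<open>real n * (1/4) \<le> real n * s\<close>
    by (intro divide_nonneg_nonneg) linarith+
  ultimately have "N * q * V \<le> N * (1/4) * (2 * s)" using N q by (intro mult_mono) auto
  then show "(\<Sum>x\<in>slice_vectors n d. (centered_sum n p b x)\<^sup>2) \<le> s * N / 2"
    unfolding eq by (simp add: mult.commute)
qed

lemma slice_anticoncentration_far:
  assumes "2 \<le> d" "d < n" and s: "1/4 \<le> (\<Sum>j<n. (b j)\<^sup>2)" and "(\<Sum>j<n. b j)\<^sup>2 \<le> real n / 64"
    and far: "400 * (\<Sum>j<n. (b j)\<^sup>2) \<le> t\<^sup>2"
  defines "p \<equiv> real d / real n"
  shows "721 / 722 * real (n choose d)
    \<le> real (card {x \<in> slice_vectors n d. p * (1 - p) / 16 \<le> (centered_sum n p b x - t)\<^sup>2})"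
proof -
  let ?S = "slice_vectors n d" and ?Y = "centered_sum n p b"
  define G where "G = {x \<in> ?S. p * (1 - p) / 16 \<le> (?Y x - t)\<^sup>2}"
  define s where "s = (\<Sum>j<n. (b j)\<^sup>2)"
  have s0: "1/4 \<le> s" using s unfolding s_def .
  have "p * (1 - p) \<le> 1/4" unfolding p_def using assms by (intro bernoulli_variance_le) auto
  then have q: "p * (1 - p) / 16 \<le> (sqrt s / 4)\<^sup>2" using s0 by (simp add: power_divide)
  have "sqrt ((20 * sqrt s)\<^sup>2) \<le> sqrt (t\<^sup>2)"
    using far s0 unfolding s_def[symmetric] by (intro real_sqrt_le_mono) (simp add: power_mult_distrib)
  then have t: "20 * sqrt s \<le> \<bar>t\<bar>" by (simp only: real_sqrt_abs)
  have "?S - G \<subseteq> {x \<in> ?S. 361 * s \<le> (?Y x)\<^sup>2}"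
  proof safe
    fix x assume "x \<in> ?S" "x \<notin> G"
    then have "\<bar>?Y x - t\<bar>\<^sup>2 < (sqrt s / 4)\<^sup>2" using q unfolding G_def by simp
    then have "\<bar>?Y x - t\<bar> < sqrt s / 4" by (rule power2_less_imp_less) (use s0 in simp)
    then have "19 * sqrt s \<le> \<bar>?Y x\<bar>" using t by linarith
    then have "(19 * sqrt s)\<^sup>2 \<le> \<bar>?Y x\<bar>\<^sup>2" using s0 by (intro power_mono) auto
    then show "361 * s \<le> (?Y x)\<^sup>2" using s0 by (simp add: power_mult_distrib)
  qed
  then have "s * (361 * real (card (?S - G))) \<le> 361 * s * real (card {x \<in> ?S. 361 * s \<le> (?Y x)\<^sup>2})"
    using s0 finite_slice_vectors by (simp add: card_mono)
  also have "\<dots> \<le> (\<Sum>x\<in>?S. (?Y x)\<^sup>2)" by (rule card_threshold_le_sum[OF finite_slice_vectors]) simp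
  also have "\<dots> \<le> s * (real (n choose d) / 2)"
    using slice_sum_centered_sum_sq_bounds(2)[OF assms(1-4)] unfolding p_def s_def by simp
  finally have "361 * real (card (?S - G)) \<le> real (n choose d) / 2"
    using s0 by (simp add: mult_le_cancel_left_pos)
  moreover have "card ?S = card (?S - G) + card G"
    using card_Diff_subset[of G ?S] card_mono[of ?S G] finite_slice_vectors unfolding G_def
    by (simp add: finite_subset)
  ultimately show ?thesis unfolding G_def[symmetric] card_slice_vectors by simp
qed

lemma power4_add_le: "((a::real) + c) ^ 4 \<le> 8 * (a ^ 4 + c ^ 4)"
proof -
  have "(a + c)\<^sup>2 \<le> 2 * (a\<^sup>2 + c\<^sup>2)"
    using zero_le_power2[of "a - c"] by (simp add: power2_eq_square algebra_simps)
  have "(a + c) ^ 4 = ((a + c)\<^sup>2)\<^sup>2" by simp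
  also have "\<dots> \<le> (2 * (a\<^sup>2 + c\<^sup>2))\<^sup>2"
    using \<open>(a + c)\<^sup>2 \<le> 2 * (a\<^sup>2 + c\<^sup>2)\<close> by (intro power_mono) auto
  also have "\<dots> = 4 * (a\<^sup>2 + c\<^sup>2)\<^sup>2" by (simp add: power2_eq_square algebra_simps)
  also have "\<dots> \<le> 8 * (a ^ 4 + c ^ 4)"
    using zero_le_power2[of "a\<^sup>2 - c\<^sup>2"] by (simp add: power2_eq_square power4_eq_xxxx algebra_simps)
  finally show ?thesis .
qed

lemma slice_anticoncentration_near:
  assumes "2 \<le> d" "d < n" and s: "1/4 \<le> (\<Sum>j<n. (b j)\<^sup>2)" and "(\<Sum>j<n. b j)\<^sup>2 \<le> real n / 64"
    and near: "t\<^sup>2 \<le> 400 * (\<Sum>j<n. (b j)\<^sup>2)"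
  defines "p \<equiv> real d / real n"
  shows "(p * (1 - p))\<^sup>2 / 16000000 * real (n choose d)
    \<le> real (card {x \<in> slice_vectors n d. p * (1 - p) / 16 \<le> (centered_sum n p b x - t)\<^sup>2})"
proof -
  let ?S = "slice_vectors n d" and ?Y = "centered_sum n p b"
  define W where "W x = ?Y x - t" for x
  define N where "N = real (n choose d)"
  define q where "q = p * (1 - p)"
  define s where "s = (\<Sum>j<n. (b j)\<^sup>2)"
  define R where "R = 6000000 * s / q"
  have N: "0 < N" unfolding N_def using assms by simp
  have s0: "1/4 \<le> s" using s unfolding s_def .
  have q: "0 < q" unfolding q_def p_def using assms by simp
  have R: "0 < R" unfolding R_def using s0 q by simp
  have "(\<Sum>x\<in>?S. (W x)\<^sup>2) = (\<Sum>x\<in>?S. (?Y x)\<^sup>2) - 2 * t * (\<Sum>x\<in>?S. ?Y x) + N * t\<^sup>2"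
    unfolding W_def power2_diff
    by (simp add: sum.distrib sum_subtractf sum_distrib_left N_def card_slice_vectors algebra_simps)
  also have "(\<Sum>x\<in>?S. ?Y x) = 0" using slice_sum_centered_sum[of d n b] assms unfolding p_def by simp
  finally have "7/8 * q * s * N \<le> (\<Sum>x\<in>?S. (W x)\<^sup>2)"
    using slice_sum_centered_sum_sq_bounds(1)[OF assms(1-4)] N
    unfolding p_def q_def s_def N_def by (simp add: add_increasing2)
  also have "(\<Sum>x\<in>?S. (W x)\<^sup>2) \<le> q / 16 * N + R * real (card {x \<in> ?S. q / 16 \<le> (W x)\<^sup>2})
      + (\<Sum>x\<in>?S. (W x) ^ 4) / R"
    using sum_sq_le_threshold[OF finite_slice_vectors R, of "q / 16" W] q
    unfolding N_def card_slice_vectors by (simp add: mult.commute)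
  also have "(\<Sum>x\<in>?S. (W x) ^ 4) \<le> 1500000 * (N * s\<^sup>2)"
  proof -
    have "(\<Sum>x\<in>?S. (W x) ^ 4) \<le> (\<Sum>x\<in>?S. 8 * ((?Y x) ^ 4 + t ^ 4))"
      unfolding W_def using power4_add_le[of "?Y _" "- t"] by (intro sum_mono) simp
    also have "\<dots> = 8 * (\<Sum>x\<in>?S. (?Y x) ^ 4) + 8 * N * t ^ 4"
      by (simp add: sum.distrib sum_distrib_left N_def card_slice_vectors)
    also have "\<dots> \<le> 8 * (24576 * s\<^sup>2 * N) + 8 * N * (160000 * s\<^sup>2)"
    proof (intro add_mono mult_left_mono)
      show "(\<Sum>x\<in>?S. (?Y x) ^ 4) \<le> 24576 * s\<^sup>2 * N"
        using slice_sum_centered_sum_power4[of d n b] assms s0 unfolding p_def s_def N_def by simp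
      have "(t\<^sup>2)\<^sup>2 \<le> (400 * s)\<^sup>2" using near unfolding s_def by (intro power_mono) auto
      then show "t ^ 4 \<le> 160000 * s\<^sup>2" by (simp add: power_mult_distrib flip: power_mult)
    qed (use N in auto)
    finally have "(\<Sum>x\<in>?S. (W x) ^ 4) \<le> 1476608 * (N * s\<^sup>2)" by simp
    moreover have "0 \<le> N * s\<^sup>2" using N by simp
    ultimately show ?thesis by linarith
  qed
  finally have "7/8 * q * s * N \<le> q / 16 * N + R * real (card {x \<in> ?S. q / 16 \<le> (W x)\<^sup>2})
      + 1500000 * (N * s\<^sup>2) / R"
    using R by (simp add: divide_right_mono)
  moreover have "1500000 * (N * s\<^sup>2) / R = q * s * N / 4" "q / 16 * N \<le> q * s * N / 4"
    unfolding R_def using s0 q N by (simp_all add: power2_eq_square field_simps)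
  ultimately have "3/8 * q * s * N \<le> R * real (card {x \<in> ?S. q / 16 \<le> (W x)\<^sup>2})"
    by linarith
  then have "3/8 * q * s * N / R \<le> real (card {x \<in> ?S. q / 16 \<le> (W x)\<^sup>2})"
    using R by (simp add: field_simps)
  moreover have "3/8 * q * s * N / R = q\<^sup>2 / 16000000 * N"
    unfolding R_def using s0 q by (simp add: power2_eq_square field_simps)
  ultimately have "q\<^sup>2 / 16000000 * N \<le> real (card {x \<in> ?S. q / 16 \<le> (W x)\<^sup>2})" by linarith
  then show ?thesis unfolding W_def q_def N_def .
qed

lemma slice_anticoncentration:
  assumes "2 \<le> d" "d < n" "1/4 \<le> (\<Sum>j<n. (b j)\<^sup>2)" "(\<Sum>j<n. b j)\<^sup>2 \<le> real n / 64"
  defines "p \<equiv> real d / real n"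
  shows "(p * (1 - p))\<^sup>2 / 10^8 * real (n choose d)
    \<le> real (card {x \<in> slice_vectors n d. p * (1 - p) / 16 \<le> (centered_sum n p b x - t)\<^sup>2})"
proof -
  have "0 \<le> p * (1 - p)" "p * (1 - p) \<le> 1/4" unfolding p_def using assms
    by (intro bernoulli_variance_le; simp)+
  then have "(p * (1 - p))\<^sup>2 \<le> 1" by (simp add: power_le_one)
  then have "(p * (1 - p))\<^sup>2 / 10^8 \<le> 721 / 722" "(p * (1 - p))\<^sup>2 / 10^8 \<le> (p * (1 - p))\<^sup>2 / 16000000"
    by simp_all
  then have small: "(p * (1 - p))\<^sup>2 / 10^8 * real (n choose d) \<le> 721 / 722 * real (n choose d)"
    "(p * (1 - p))\<^sup>2 / 10^8 * real (n choose d) \<le> (p * (1 - p))\<^sup>2 / 16000000 * real (n choose d)"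
    by (intro mult_right_mono; simp)+
  show ?thesis
  proof (cases "400 * (\<Sum>j<n. (b j)\<^sup>2) \<le> t\<^sup>2")
    case True
    then show ?thesis using small slice_anticoncentration_far[OF assms(1-4) True, folded p_def] by linarith
  next
    case False
    then have "t\<^sup>2 \<le> 400 * (\<Sum>j<n. (b j)\<^sup>2)" by simp
    from slice_anticoncentration_near[OF assms(1-4) this, folded p_def] small(2) show ?thesis by linarith
  qed
qed

lemma finite_slice_matrices: "finite (slice_matrices m n d)"
  unfolding slice_matrices_def by (intro finite_PiE) (auto simp: finite_slice_vectors)

lemma card_slice_matrices: "card (slice_matrices m n d) = (n choose d) ^ m"
  unfolding slice_matrices_def by (simp add: card_PiE card_slice_vectors)

lemma slice_matrix_row: "M \<in> slice_matrices m n d \<Longrightarrow> i < m \<Longrightarrow> M i \<in> slice_vectors n d"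
  unfolding slice_matrices_def by auto

lemma sum_slice_matrices_exp_sum_rows:
  fixes h :: "(nat \<Rightarrow> real) \<Rightarrow> real"
  shows "(\<Sum>M\<in>slice_matrices m n d. exp (\<Sum>i<m. h (M i))) = (\<Sum>x\<in>slice_vectors n d. exp (h x)) ^ m"
proof -
  have "(\<Sum>M\<in>slice_matrices m n d. exp (\<Sum>i<m. h (M i))) = (\<Sum>M\<in>slice_matrices m n d. \<Prod>i<m. exp (h (M i)))"
    by (simp add: exp_sum)
  also have "\<dots> = (\<Prod>i<m. \<Sum>x\<in>slice_vectors n d. exp (h x))"
    unfolding slice_matrices_def by (rule prod_sum_PiE[symmetric]) (auto simp: finite_slice_vectors)
  finally show ?thesis by simp
qed

lemma card_slice_matrices_sum_rows_ge:
  fixes h :: "(nat \<Rightarrow> real) \<Rightarrow> real"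
  shows "real (card {M \<in> slice_matrices m n d. a \<le> (\<Sum>i<m. h (M i))})
    \<le> exp (- a) * (\<Sum>x\<in>slice_vectors n d. exp (h x)) ^ m"
proof -
  let ?SM = "slice_matrices m n d"
  have "real (card {M \<in> ?SM. a \<le> (\<Sum>i<m. h (M i))}) = (\<Sum>M\<in>?SM. if a \<le> (\<Sum>i<m. h (M i)) then 1 else 0)"
    using finite_slice_matrices by (simp add: sum.If_cases Int_def)
  also have "\<dots> \<le> (\<Sum>M\<in>?SM. exp (- a) * exp (\<Sum>i<m. h (M i)))"
    by (intro sum_mono) (auto simp flip: exp_add)
  also have "\<dots> = exp (- a) * (\<Sum>x\<in>slice_vectors n d. exp (h x)) ^ m"
    by (simp add: sum_distrib_left[symmetric] sum_slice_matrices_exp_sum_rows)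
  finally show ?thesis .
qed

definition sign_vectors :: "nat \<Rightarrow> (nat \<Rightarrow> real) set" where
  "sign_vectors n = (\<Pi>\<^sub>E j\<in>{..<n}. {-1, 1})"

lemma finite_sign_vectors: "finite (sign_vectors n)"
  unfolding sign_vectors_def by (intro finite_PiE) auto

lemma card_sign_vectors: "card (sign_vectors n) = 2 ^ n"
  unfolding sign_vectors_def by (simp add: card_PiE numeral_2_eq_2)

lemma card_slice_matrices_sign_deviation_ge:
  assumes "d \<le> n" "0 < n" "\<sigma> \<in> sign_vectors n"
  shows "real (card {M \<in> slice_matrices m n d.
      20 * real m * sqrt n \<le> (\<Sum>i<m. \<bar>centered_sum n (real d / real n) \<sigma> (M i)\<bar>)})
    \<le> exp (- 8 * real m) * real (card (slice_matrices m n d))"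
proof -
  let ?Y = "centered_sum n (real d / real n) \<sigma>"
  define u where "u = 1 / (2 * sqrt n)"
  have u: "0 < u" "u * (20 * real m * sqrt n) = 10 * real m" using assms unfolding u_def by auto
  have \<sigma>: "\<sigma> j = 1 \<or> \<sigma> j = -1" if "j < n" for j using assms(3) that unfolding sign_vectors_def by auto
  have "(\<sigma> j)\<^sup>2 = 1" if "j < n" for j using \<sigma>[OF that] by auto
  then have "(\<Sum>j<n. (\<sigma> j)\<^sup>2) = real n" by simp
  moreover have "2 * u * \<bar>\<sigma> j\<bar> \<le> 1" if "j < n" for j
    using \<sigma>[OF that] assms unfolding u_def by auto
  ultimately have mgf: "(\<Sum>x\<in>slice_vectors n d. exp (u * \<bar>?Y x\<bar>)) \<le> 2 * real (n choose d) * exp 1"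
    using slice_mgf_abs_le[OF assms(1,2) less_imp_le[OF u(1)], of \<sigma>] assms
    unfolding u_def by (simp add: power_divide power_mult_distrib)
  have "{M \<in> slice_matrices m n d. 20 * real m * sqrt n \<le> (\<Sum>i<m. \<bar>?Y (M i)\<bar>)}
      = {M \<in> slice_matrices m n d. 10 * real m \<le> (\<Sum>i<m. u * \<bar>?Y (M i)\<bar>)}"
  proof -
    have "20 * real m * sqrt n \<le> S \<longleftrightarrow> 10 * real m \<le> u * S" for S
      using mult_le_cancel_left_pos[OF u(1), of "20 * real m * sqrt n" S] u(2) by simp
    then show ?thesis by (simp flip: sum_distrib_left)
  qed
  then have "real (card {M \<in> slice_matrices m n d. 20 * real m * sqrt n \<le> (\<Sum>i<m. \<bar>?Y (M i)\<bar>)})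
      \<le> exp (- (10 * real m)) * (\<Sum>x\<in>slice_vectors n d. exp (u * \<bar>?Y x\<bar>)) ^ m"
    using card_slice_matrices_sum_rows_ge[of m n d "10 * real m"] by simp
  also have "\<dots> \<le> exp (- (10 * real m)) * (exp 2 * real (n choose d)) ^ m"
  proof (intro mult_left_mono power_mono)
    have "2 * exp 1 \<le> exp (1::real) * exp 1" using exp_ge_add_one_self[of "1::real"] by simp
    then have "2 * exp 1 * real (n choose d) \<le> exp 2 * real (n choose d)"
      by (intro mult_right_mono) (simp_all flip: exp_add)
    then show "(\<Sum>x\<in>slice_vectors n d. exp (u * \<bar>?Y x\<bar>)) \<le> exp 2 * real (n choose d)"
      using mgf by (simp add: ac_simps)
  qed (auto intro: sum_nonneg)
  also have "\<dots> = exp (- 8 * real m) * real (card (slice_matrices m n d))"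
    by (simp add: card_slice_matrices power_mult_distrib exp_of_nat_mult[symmetric] exp_add[symmetric])
  finally show ?thesis .
qed

lemma slice_sum_exp_neg_dist_le:
  assumes "2 \<le> d" "d < n" "1/4 \<le> (\<Sum>j<n. (b j)\<^sup>2)" "(\<Sum>j<n. b j)\<^sup>2 \<le> real n / 64"
  defines "p \<equiv> real d / real n"
  defines "\<tau> \<equiv> sqrt (p * (1 - p)) / 4" and "\<eta> \<equiv> (p * (1 - p))\<^sup>2 / 10^8"
  shows "(\<Sum>x\<in>slice_vectors n d. exp (- \<bar>(\<Sum>j<n. x j * b j) - t\<bar> / \<tau>))
    \<le> real (n choose d) * exp (- \<eta> / 2)"
proof -
  let ?S = "slice_vectors n d"
  define t' where "t' = t - p * (\<Sum>j<n. b j)"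
  define G where "G = {x \<in> ?S. p * (1 - p) / 16 \<le> (centered_sum n p b x - t')\<^sup>2}"
  have q: "0 < p * (1 - p)" unfolding p_def using assms by simp
  then have \<tau>: "0 < \<tau>" "p * (1 - p) / 16 = \<tau>\<^sup>2" unfolding \<tau>_def by (auto simp: power_divide)
  have dist: "(\<Sum>j<n. x j * b j) - t = centered_sum n p b x - t'" for x
    unfolding centered_sum_eq t'_def by (simp add: mult.commute)
  have "2 \<le> exp (1::real)" using exp_ge_add_one_self[of "1::real"] by simp
  then have "exp (- \<bar>(\<Sum>j<n. x j * b j) - t\<bar> / \<tau>) \<le> 1 - (if x \<in> G then 1 else 0) / 2" for x
  proof (cases "x \<in> G")
    case True
    then have "\<tau>\<^sup>2 \<le> \<bar>centered_sum n p b x - t'\<bar>\<^sup>2" unfolding G_def \<tau> by simp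
    then have "\<tau> \<le> \<bar>centered_sum n p b x - t'\<bar>"
      using \<tau> abs_le_square_iff[of \<tau> "centered_sum n p b x - t'"] by simp
    then have "1 \<le> \<bar>(\<Sum>j<n. x j * b j) - t\<bar> / \<tau>" unfolding dist using \<tau> by simp
    then have "exp (- \<bar>(\<Sum>j<n. x j * b j) - t\<bar> / \<tau>) \<le> exp (- 1)" by simp
    also have "\<dots> \<le> 1 / 2" using \<open>2 \<le> exp 1\<close> by (simp add: exp_minus field_simps)
    finally show ?thesis using True by simp
  qed (use \<tau> in simp)
  then have "(\<Sum>x\<in>?S. exp (- \<bar>(\<Sum>j<n. x j * b j) - t\<bar> / \<tau>))
      \<le> (\<Sum>x\<in>?S. 1 - (if x \<in> G then 1 else 0) / 2)"
    by (rule sum_mono)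
  also have "\<dots> = real (n choose d) - real (card G) / 2"
    using finite_slice_vectors unfolding G_def
    by (simp add: sum_subtractf sum_divide_distrib[symmetric] sum.If_cases Int_def card_slice_vectors)
  also have "\<dots> \<le> real (n choose d) * (1 - \<eta> / 2)"
    using slice_anticoncentration[OF assms(1-4), of t'] unfolding G_def \<eta>_def p_def
    by (simp add: algebra_simps)
  also have "\<dots> \<le> real (n choose d) * exp (- \<eta> / 2)"
    using exp_ge_add_one_self[of "- \<eta> / 2"] by (intro mult_left_mono) auto
  finally show ?thesis .
qed

lemma card_slice_matrices_affine_small_le:
  assumes "2 \<le> d" "d < n" "1/4 \<le> (\<Sum>j<n. (b j)\<^sup>2)" "(\<Sum>j<n. b j)\<^sup>2 \<le> real n / 64"
  defines "p \<equiv> real d / real n"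
  defines "\<tau> \<equiv> sqrt (p * (1 - p)) / 4" and "\<eta> \<equiv> (p * (1 - p))\<^sup>2 / 10^8"
  shows "real (card {M \<in> slice_matrices m n d. (\<Sum>i<m. \<bar>(\<Sum>j<n. M i j * b j) - t\<bar>) \<le> \<eta> * \<tau> / 4 * real m})
    \<le> exp (- \<eta> * real m / 4) * real (card (slice_matrices m n d))"
proof -
  define h where "h x = - \<bar>(\<Sum>j<n. x j * b j) - t\<bar> / \<tau>" for x :: "nat \<Rightarrow> real"
  have \<tau>: "0 < \<tau>" unfolding \<tau>_def p_def using assms by simp
  have "(\<Sum>i<m. \<bar>(\<Sum>j<n. M i j * b j) - t\<bar>) \<le> \<eta> * \<tau> / 4 * real m
      \<longleftrightarrow> - (\<eta> * real m / 4) \<le> (\<Sum>i<m. h (M i))" for M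
    unfolding h_def using \<tau> by (simp add: sum_negf sum_divide_distrib[symmetric] divide_le_eq field_simps)
  then have "real (card {M \<in> slice_matrices m n d. (\<Sum>i<m. \<bar>(\<Sum>j<n. M i j * b j) - t\<bar>) \<le> \<eta> * \<tau> / 4 * real m})
      \<le> exp (\<eta> * real m / 4) * (\<Sum>x\<in>slice_vectors n d. exp (h x)) ^ m"
    using card_slice_matrices_sum_rows_ge[of m n d "- (\<eta> * real m / 4)" h] by simp
  also have "\<dots> \<le> exp (\<eta> * real m / 4) * (real (n choose d) * exp (- \<eta> / 2)) ^ m"
    using slice_sum_exp_neg_dist_le[OF assms(1-4), of t] unfolding h_def \<tau>_def \<eta>_def p_def
    by (intro mult_left_mono power_mono) (auto intro: sum_nonneg)
  also have "\<dots> = exp (- \<eta> * real m / 4) * real (card (slice_matrices m n d))"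
    by (simp add: card_slice_matrices power_mult_distrib exp_of_nat_mult[symmetric] exp_add[symmetric]
        field_simps)
  finally show ?thesis .
qed

definition lattice_point :: "nat \<Rightarrow> real \<Rightarrow> nat list \<Rightarrow> nat \<Rightarrow> real" where
  "lattice_point n \<epsilon> l j = (if j < n then \<epsilon> / sqrt n * (real (l ! j) - real (l ! (n + j))) else 0)"

definition lattice_net :: "nat \<Rightarrow> nat \<Rightarrow> real \<Rightarrow> (nat \<Rightarrow> real) set" where
  "lattice_net n L \<epsilon> = lattice_point n \<epsilon> ` {l. length l = 2 * n + 1 \<and> sum_list l = L}"

lemma finite_length_sum_list: "finite {l. length l = k \<and> sum_list l = (L::nat)}"
proof (rule finite_subset)
  show "{l. length l = k \<and> sum_list l = L} \<subseteq> {l. set l \<subseteq> {..L} \<and> length l = k}"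
    using member_le_sum_list by fastforce
qed (rule finite_lists_length_eq, simp)

lemma finite_lattice_net: "finite (lattice_net n L \<epsilon>)"
  unfolding lattice_net_def using finite_length_sum_list by simp

lemma card_lattice_net_le: "card (lattice_net n L \<epsilon>) \<le> (L + 2 * n) choose L"
proof -
  have "card (lattice_net n L \<epsilon>) \<le> card {l. length l = 2 * n + 1 \<and> sum_list l = L}"
    unfolding lattice_net_def by (rule card_image_le[OF finite_length_sum_list])
  also have "\<dots> = (L + 2 * n) choose L" using card_length_sum_list[of "2 * n + 1" L] by simp
  finally show ?thesis .
qed

lemma power_div_fact_le_exp: "0 \<le> (x::real) \<Longrightarrow> x ^ k / fact k \<le> exp x"
proof -
  assume x: "0 \<le> x"
  have s: "(\<lambda>n. x ^ n /\<^sub>R fact n) sums exp x" by (rule exp_converges)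
  have "sum (\<lambda>n. x ^ n /\<^sub>R fact n) {k} \<le> suminf (\<lambda>n. x ^ n /\<^sub>R fact n)"
    using x by (intro sum_le_suminf[OF sums_summable[OF s]]) auto
  then show ?thesis using sums_unique[OF s] by (simp add: divide_inverse mult.commute)
qed

lemma card_lattice_net_le_exp:
  assumes "L \<le> n" "0 < \<gamma>" "\<gamma> \<le> 3" "0 < n"
  shows "real (card (lattice_net n L \<epsilon>)) \<le> (3 / \<gamma>) ^ L * exp (\<gamma> * real n)"
proof -
  have "real (card (lattice_net n L \<epsilon>)) * fact L \<le> real ((L + 2 * n) choose L) * fact L"
    using card_lattice_net_le by (intro mult_right_mono) auto
  also have "\<dots> \<le> real (L + 2 * n) ^ L"
    using binomial_fact_pow[of "L + 2 * n" L] by (metis of_nat_fact of_nat_le_iff of_nat_mult of_nat_power)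
  also have "\<dots> \<le> (3 * real n) ^ L" using assms by (intro power_mono) auto
  finally have "real (card (lattice_net n L \<epsilon>)) \<le> (3 * real n) ^ L / fact L"
    by (simp add: field_simps)
  also have "\<dots> = (3 / \<gamma>) ^ L * ((\<gamma> * real n) ^ L / fact L)"
    using assms by (simp add: power_mult_distrib power_divide field_simps)
  also have "\<dots> \<le> (3 / \<gamma>) ^ L * exp (\<gamma> * real n)"
    using assms by (intro mult_left_mono power_div_fact_le_exp) auto
  finally show ?thesis .
qed

lemma lattice_net_sum_abs_le:
  assumes "b \<in> lattice_net n L \<epsilon>" "0 \<le> \<epsilon>"
  shows "(\<Sum>j<n. \<bar>b j\<bar>) \<le> \<epsilon> / sqrt n * real L"
proof -
  obtain l where l: "length l = 2 * n + 1" "sum_list l = L" and b: "b = lattice_point n \<epsilon> l"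
    using assms unfolding lattice_net_def by auto
  have "(\<Sum>j<n. \<bar>b j\<bar>) \<le> (\<Sum>j<n. \<epsilon> / sqrt n * (real (l ! j) + real (l ! (n + j))))"
    unfolding b lattice_point_def using assms(2)
    by (intro sum_mono) (auto simp: abs_mult abs_le_iff intro!: divide_right_mono mult_left_mono)
  also have "\<dots> = \<epsilon> / sqrt n * (\<Sum>i<2 * n. real (l ! i))"
  proof -
    have "(\<Sum>j<n. real (l ! (n + j))) = (\<Sum>i\<in>{n..<2 * n}. real (l ! i))"
      using sum.shift_bounds_nat_ivl[of "\<lambda>i. real (l ! i)" 0 n n]
      by (simp add: atLeast0LessThan add.commute mult_2)
    moreover have "(\<Sum>i<n. real (l ! i)) + (\<Sum>i\<in>{n..<2 * n}. real (l ! i)) = (\<Sum>i<2 * n. real (l ! i))"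
      using sum.atLeastLessThan_concat[of 0 n "2 * n" "\<lambda>i. real (l ! i)"] by (simp add: atLeast0LessThan)
    ultimately have "(\<Sum>j<n. real (l ! j) + real (l ! (n + j))) = (\<Sum>i<2 * n. real (l ! i))"
      by (simp add: sum.distrib)
    then show ?thesis by (metis sum_distrib_left)
  qed
  also have "\<dots> \<le> \<epsilon> / sqrt n * (\<Sum>i<2 * n + 1. real (l ! i))"
    using assms(2) by (intro mult_left_mono sum_mono2) auto
  also have "(\<Sum>i<2 * n + 1. real (l ! i)) = real L"
    unfolding l(2)[symmetric] l(1)[symmetric] sum_list_sum_nth atLeast0LessThan by simp
  finally show ?thesis .
qed

lemma lattice_net_approx:
  assumes "0 < \<epsilon>" "0 < n" and small: "(\<Sum>j<n. \<bar>w j\<bar>) * sqrt n / \<epsilon> < real L + 1"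
  shows "\<exists>b\<in>lattice_net n L \<epsilon>. (\<forall>j<n. \<bar>w j - b j\<bar> \<le> \<epsilon> / sqrt n) \<and> (\<forall>j<n. w j = 0 \<longrightarrow> b j = 0)"
proof -
  define r where "r = sqrt n / \<epsilon>"
  define k where "k j = nat \<lfloor>\<bar>w j\<bar> * r\<rfloor>" for j
  define a where "a j = (if 0 \<le> w j then k j else 0)" for j
  define c where "c j = (if 0 \<le> w j then 0 else k j)" for j
  have r: "0 < r" unfolding r_def using assms by simp
  have k: "real (k j) \<le> \<bar>w j\<bar> * r" "\<bar>w j\<bar> * r < real (k j) + 1" for j
    unfolding k_def using r by (simp_all add: of_nat_floor)
  have "real (\<Sum>j<n. k j) \<le> (\<Sum>j<n. \<bar>w j\<bar>) * r"
    using k(1) by (simp add: sum_distrib_right sum_mono)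
  then have "real (\<Sum>j<n. k j) < real L + 1"
    using small unfolding r_def by (simp only: times_divide_eq_right)
  then have K: "(\<Sum>j<n. k j) \<le> L" by linarith
  define l where "l = map a [0..<n] @ map c [0..<n] @ [L - (\<Sum>j<n. k j)]"
  have "sum_list l = (\<Sum>j<n. a j + c j) + (L - (\<Sum>j<n. k j))"
    unfolding l_def by (simp add: sum_set_upt_conv_sum_list_nat[symmetric] atLeast0LessThan sum.distrib)
  also have "(\<Sum>j<n. a j + c j) = (\<Sum>j<n. k j)" unfolding a_def c_def by (intro sum.cong) auto
  finally have "lattice_point n \<epsilon> l \<in> lattice_net n L \<epsilon>"
    using K unfolding lattice_net_def l_def by auto
  moreover have k0: "k j = 0" if "w j = 0" for j unfolding k_def that by simp
  moreover have "lattice_point n \<epsilon> l j = sgn (w j) * real (k j) / r" if "j < n" for j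
    using that k0 unfolding lattice_point_def l_def a_def c_def r_def by (auto simp: nth_append sgn_if)
  moreover have "\<bar>w j - sgn (w j) * real (k j) / r\<bar> \<le> \<epsilon> / sqrt n" for j
  proof -
    have "w j - sgn (w j) * real (k j) / r = sgn (w j) * ((\<bar>w j\<bar> * r - real (k j)) / r)"
      using r by (simp add: field_simps sgn_mult_abs abs_mult_sgn)
    then have "\<bar>w j - sgn (w j) * real (k j) / r\<bar> \<le> \<bar>\<bar>w j\<bar> * r - real (k j)\<bar> / r"
      using r by (simp add: abs_mult abs_sgn_eq mult_left_le_one_le)
    also have "\<dots> \<le> 1 / r" using k[of j] r by (intro divide_right_mono) auto
    finally show ?thesis unfolding r_def by simp
  qed
  ultimately show ?thesis by (intro bexI[of _ "lattice_point n \<epsilon> l"]) auto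
qed

lemma sum_abs_le_sqrt_card_mult:
  fixes a :: "'a \<Rightarrow> real"
  shows "(\<Sum>i\<in>I. \<bar>a i\<bar>) \<le> sqrt (real (card I)) * sqrt (\<Sum>i\<in>I. (a i)\<^sup>2)"
  using L2_set_mult_ineq[of a "\<lambda>_. 1" I] L2_set_constant[of "1::real" I]
  unfolding L2_set_def by (simp add: mult.commute)

definition grid :: "real \<Rightarrow> nat \<Rightarrow> real set" where
  "grid \<kappa> n = (\<lambda>j. \<kappa> * real_of_int j) ` {- \<lceil>sqrt n / \<kappa>\<rceil> .. \<lceil>sqrt n / \<kappa>\<rceil>}"

lemma finite_grid: "finite (grid \<kappa> n)"
  unfolding grid_def by simp

lemma card_grid_le:
  assumes "0 < \<kappa>"
  shows "real (card (grid \<kappa> n)) \<le> 2 * sqrt n / \<kappa> + 3"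
proof -
  define J where "J = \<lceil>sqrt n / \<kappa>\<rceil>"
  have "0 \<le> sqrt n / \<kappa>" using assms by simp
  then have J: "0 \<le> J" "real_of_int J \<le> sqrt n / \<kappa> + 1" unfolding J_def by linarith+
  have "card (grid \<kappa> n) \<le> card {-J..J}" unfolding grid_def J_def by (rule card_image_le) simp
  also have "card {-J..J} = nat (2 * J + 1)" using J by simp
  finally have "real (card (grid \<kappa> n)) \<le> 2 * real_of_int J + 1" using J by linarith
  then show ?thesis using J by linarith
qed

lemma grid_approx:
  assumes "0 < \<kappa>" "\<bar>t\<bar> \<le> sqrt n"
  shows "\<exists>s\<in>grid \<kappa> n. \<bar>s - t\<bar> \<le> \<kappa>"
proof -
  define c where "c = \<lceil>sqrt n / \<kappa>\<rceil>"
  define j where "j = \<lfloor>t / \<kappa>\<rfloor>"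
  have j: "real_of_int j \<le> t / \<kappa>" "t / \<kappa> < real_of_int j + 1" unfolding j_def by linarith+
  have "t / \<kappa> \<le> sqrt n / \<kappa>" "- sqrt n / \<kappa> \<le> t / \<kappa>"
    using assms by (auto simp: abs_le_iff field_simps)
  moreover have "sqrt n / \<kappa> \<le> real_of_int c" unfolding c_def by (rule le_of_int_ceiling)
  ultimately have "real_of_int j \<le> real_of_int c" "- real_of_int c - 1 < real_of_int j"
    using j by auto
  then have "j \<in> {-c..c}" by auto
  moreover have "\<bar>\<kappa> * real_of_int j - t\<bar> \<le> \<kappa>"
    using j assms(1) by (auto simp: field_simps abs_le_iff)
  ultimately show ?thesis unfolding grid_def c_def by blast
qed

text \<open>The left-hand side is linearized with the signs \<open>\<tau>\<close> of the rows; the resulting linear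
  functional of \<open>e\<close> is maximized over the cube at the vertex \<open>\<sigma> = sgn c\<close>.\<close>

lemma sum_abs_le_sign_vector:
  fixes y :: "nat \<Rightarrow> nat \<Rightarrow> real"
  assumes "0 \<le> h" "\<And>j. j < n \<Longrightarrow> \<bar>e j\<bar> \<le> h"
  shows "\<exists>\<sigma>\<in>sign_vectors n. (\<Sum>i<m. \<bar>\<Sum>j<n. y i j * e j\<bar>) \<le> h * (\<Sum>i<m. \<bar>\<Sum>j<n. y i j * \<sigma> j\<bar>)"
proof -
  define \<tau> where "\<tau> i = sgn (\<Sum>j<n. y i j * e j)" for i
  define c where "c j = (\<Sum>i<m. \<tau> i * y i j)" for j
  define \<sigma> :: "nat \<Rightarrow> real" where "\<sigma> j = (if j < n then if 0 \<le> c j then 1 else -1 else undefined)" for j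
  have "\<sigma> \<in> sign_vectors n" unfolding sign_vectors_def \<sigma>_def by (auto simp: PiE_iff extensional_def)
  have "(\<Sum>i<m. \<bar>\<Sum>j<n. y i j * e j\<bar>) = (\<Sum>j<n. e j * c j)"
    unfolding \<tau>_def c_def
    by (simp add: abs_sgn mult.commute sum_distrib_left sum_distrib_right sum.swap[of _ "{..<m}"] ac_simps)
  also have "\<dots> \<le> (\<Sum>j<n. h * \<bar>c j\<bar>)"
  proof (rule sum_mono)
    fix j assume "j \<in> {..<n}"
    have "e j * c j \<le> \<bar>e j\<bar> * \<bar>c j\<bar>" by (simp add: abs_mult[symmetric])
    also have "\<dots> \<le> h * \<bar>c j\<bar>" using assms(2) \<open>j \<in> {..<n}\<close> by (intro mult_right_mono) auto
    finally show "e j * c j \<le> h * \<bar>c j\<bar>" .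
  qed
  also have "\<dots> = h * (\<Sum>j<n. \<sigma> j * c j)"
    unfolding \<sigma>_def sum_distrib_left by (rule sum.cong) (auto simp: abs_if)
  also have "\<dots> = h * (\<Sum>i<m. \<tau> i * (\<Sum>j<n. y i j * \<sigma> j))"
    unfolding c_def by (simp add: sum_distrib_left sum_distrib_right sum.swap[of _ "{..<m}"] ac_simps)
  also have "\<dots> \<le> h * (\<Sum>i<m. \<bar>\<Sum>j<n. y i j * \<sigma> j\<bar>)"
    unfolding \<tau>_def using assms(1)
    by (intro mult_left_mono sum_mono) (auto simp: sgn_if abs_if)
  finally show ?thesis using \<open>\<sigma> \<in> sign_vectors n\<close> by blast
qed

lemma almost_const_decompose:
  assumes "v \<in> almost_const \<delta> \<rho> n"
  obtains G lam where "G \<subseteq> {..<n}" "\<And>j. j \<in> G \<Longrightarrow> \<bar>v j - lam\<bar> \<le> \<rho> / sqrt n"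
    "real (card ({..<n} - G)) \<le> \<delta> * real n" "(\<Sum>j<n. (v j)\<^sup>2) = 1"
proof -
  obtain lam where "v \<in> unit_sphere n"
    and card: "(1 - \<delta>) * real n \<le> real (card {i. i < n \<and> \<bar>v i - lam\<bar> \<le> \<rho> / sqrt (real n)})"
    using assms unfolding almost_const_def by auto
  define G where "G = {i. i < n \<and> \<bar>v i - lam\<bar> \<le> \<rho> / sqrt (real n)}"
  have G: "G \<subseteq> {..<n}" unfolding G_def by auto
  then have "real (card ({..<n} - G)) = real n - real (card G)"
    using card_mono[OF _ G] by (simp add: card_Diff_subset finite_subset of_nat_diff)
  then have "real (card ({..<n} - G)) \<le> \<delta> * real n"
    using card unfolding G_def by (simp add: algebra_simps)
  moreover have "(\<Sum>j<n. (v j)\<^sup>2) = 1" using \<open>v \<in> unit_sphere n\<close> unfolding unit_sphere_def by auto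
  ultimately show thesis using that[OF G] unfolding G_def by auto
qed

lemma sum_lessThan_split:
  fixes n :: nat and f :: "nat \<Rightarrow> 'a::comm_monoid_add"
  assumes "G \<subseteq> {..<n}"
  shows "(\<Sum>j<n. f j) = (\<Sum>j\<in>G. f j) + (\<Sum>j\<in>{..<n} - G. f j)"
  using sum.subset_diff[OF assms finite_lessThan, of f] by (simp add: add.commute)

lemma L2_shift_le:
  assumes "finite B"
  shows "sqrt (\<Sum>j\<in>B. (v j - lam)\<^sup>2) \<le> sqrt (\<Sum>j\<in>B. (v j)\<^sup>2) + \<bar>lam\<bar> * sqrt (real (card B))"
    and "sqrt (\<Sum>j\<in>B. (v j)\<^sup>2) \<le> sqrt (\<Sum>j\<in>B. (v j - lam)\<^sup>2) + \<bar>lam\<bar> * sqrt (real (card B))"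
  using L2_set_triangle_ineq[of v "\<lambda>_. - lam" B] L2_set_triangle_ineq[of "\<lambda>j. v j - lam" "\<lambda>_. lam" B]
  unfolding L2_set_constant by (simp_all add: L2_set_def mult.commute)

lemma almost_const_level_le:
  assumes "(\<Sum>j<n. (v j)\<^sup>2) = 1" "G \<subseteq> {..<n}" "\<And>j. j \<in> G \<Longrightarrow> \<bar>v j - lam\<bar> \<le> \<rho> / sqrt n"
    and "real (card ({..<n} - G)) \<le> \<delta> * real n" "\<delta> \<le> 1/2" "0 \<le> \<rho>" "\<rho> \<le> 1/16" "0 < n"
  shows "\<bar>lam\<bar> * sqrt n \<le> 2"
proof (rule ccontr)
  assume "\<not> \<bar>lam\<bar> * sqrt n \<le> 2"
  have "real (card G) = real n - real (card ({..<n} - G))"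
    using assms(2) card_mono[OF _ assms(2)] by (simp add: card_Diff_subset finite_subset of_nat_diff)
  then have G: "real n / 2 \<le> real (card G)" using assms(4,5) mult_right_mono[OF assms(5), of "real n"] by simp
  have "15/8 / sqrt n \<le> \<bar>v j\<bar>" if "j \<in> G" for j
  proof -
    have "15/8 \<le> \<bar>lam\<bar> * sqrt n - \<rho>" using \<open>\<not> \<bar>lam\<bar> * sqrt n \<le> 2\<close> assms(7) by linarith
    then have "15/8 / sqrt n \<le> (\<bar>lam\<bar> * sqrt n - \<rho>) / sqrt n"
      using assms(8) by (intro divide_right_mono) auto
    then have "15/8 / sqrt n \<le> \<bar>lam\<bar> - \<rho> / sqrt n"
      using assms(8) by (simp add: diff_divide_distrib)
    then show ?thesis using assms(3)[OF that] by linarith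
  qed
  then have "(15/8 / sqrt n)\<^sup>2 \<le> (v j)\<^sup>2" if "j \<in> G" for j
    using that by (metis abs_le_square_iff abs_of_nonneg divide_nonneg_nonneg real_sqrt_ge_zero
      zero_le_divide_iff of_nat_0_le_iff zero_le_numeral)
  then have "real (card G) * (225 / 64 / real n) \<le> (\<Sum>j\<in>G. (v j)\<^sup>2)"
    using sum_mono[of G "\<lambda>_. (15/8 / sqrt n)\<^sup>2"] assms(8) by (simp add: power_divide)
  also have "\<dots> \<le> 1" using assms(1,2) by (metis sum_mono2 finite_lessThan zero_le_power2)
  finally have "real (card G) * (225 / 64 / real n) \<le> 1" .
  moreover have "real n / 2 * (225 / 64 / real n) \<le> real (card G) * (225 / 64 / real n)"
    using G by (intro mult_right_mono) auto
  moreover have "real n / 2 * (225 / 64 / real n) = 225 / 128" using assms(8) by simp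
  ultimately show False by linarith
qed

lemma slice_inner_ge_of_large_level:
  assumes x: "x \<in> slice_vectors n d" and dp: "real d = p * real n" "0 < p" "0 < n"
    and v: "(\<Sum>j<n. (v j)\<^sup>2) = 1" and G: "G \<subseteq> {..<n}" and Gv: "\<And>j. j \<in> G \<Longrightarrow> \<bar>v j - lam\<bar> \<le> \<rho> / sqrt n"
    and B: "real (card ({..<n} - G)) \<le> \<delta> * real n" and "0 \<le> \<delta>" "\<delta> \<le> 1/2" "0 \<le> \<rho>" "\<rho> \<le> 1/16"
    and large: "1/4 \<le> \<bar>lam\<bar> * sqrt n" and small: "p * \<rho> + 3 * sqrt \<delta> \<le> p / 8"
  shows "p * sqrt n / 8 \<le> \<bar>\<Sum>j<n. x j * v j\<bar>"
proof -
  define B where "B = {..<n} - G"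
  have sn: "0 < sqrt n" using dp by simp
  have x01: "x j = 0 \<or> x j = 1" for j using slice_vector_01[OF x] .
  then have x0: "0 \<le> x j" for j by (metis order_refl zero_le_one)
  have split: "(\<Sum>j<n. x j * v j) = lam * real d + (\<Sum>j\<in>G. x j * (v j - lam)) + (\<Sum>j\<in>B. x j * (v j - lam))"
  proof -
    have "(\<Sum>j<n. x j * v j) = lam * (\<Sum>j<n. x j) + (\<Sum>j<n. x j * (v j - lam))"
      by (simp add: sum_distrib_left sum.distrib[symmetric] algebra_simps)
    also have "(\<Sum>j<n. x j * (v j - lam)) = (\<Sum>j\<in>G. x j * (v j - lam)) + (\<Sum>j\<in>B. x j * (v j - lam))"
      unfolding B_def by (rule sum_lessThan_split[OF G])
    finally show ?thesis using slice_vector_sum[OF x] by simp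
  qed
  have "\<bar>x j * (v j - lam)\<bar> \<le> x j * (\<rho> / sqrt n)" if "j \<in> G" for j
    using mult_left_mono[OF Gv[OF that] x0[of j]] x0[of j] by (simp add: abs_mult)
  then have "\<bar>\<Sum>j\<in>G. x j * (v j - lam)\<bar> \<le> (\<Sum>j\<in>G. x j * (\<rho> / sqrt n))"
    by (intro order_trans[OF sum_abs] sum_mono)
  also have "\<dots> \<le> (\<Sum>j<n. x j) * (\<rho> / sqrt n)"
    unfolding sum_distrib_right[symmetric] using G x0 assms(11) sn
    by (intro mult_right_mono sum_mono2) auto
  also have "\<dots> = p * \<rho> * sqrt n"
    unfolding slice_vector_sum[OF x] dp(1) using sn by (simp add: field_simps)
  finally have good: "\<bar>\<Sum>j\<in>G. x j * (v j - lam)\<bar> \<le> p * \<rho> * sqrt n" .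
  have "\<bar>x j * (v j - lam)\<bar> \<le> \<bar>v j - lam\<bar>" for j using x01[of j] by (cases "x j = 0") auto
  then have "\<bar>\<Sum>j\<in>B. x j * (v j - lam)\<bar> \<le> (\<Sum>j\<in>B. \<bar>v j - lam\<bar>)"
    by (intro order_trans[OF sum_abs] sum_mono)
  also have "\<dots> \<le> sqrt (real (card B)) * sqrt (\<Sum>j\<in>B. (v j - lam)\<^sup>2)" by (rule sum_abs_le_sqrt_card_mult)
  also have "\<dots> \<le> sqrt (\<delta> * real n) * 3"
  proof (rule mult_mono)
    have "sqrt (\<Sum>j\<in>B. (v j)\<^sup>2) \<le> 1"
      using v sum_mono2[of "{..<n}" B "\<lambda>j. (v j)\<^sup>2"] unfolding B_def by auto
    moreover have "\<bar>lam\<bar> * sqrt (real (card B)) \<le> \<bar>lam\<bar> * sqrt n"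
      using card_mono[of "{..<n}" B] unfolding B_def by (intro mult_left_mono) auto
    ultimately show "sqrt (\<Sum>j\<in>B. (v j - lam)\<^sup>2) \<le> 3"
      using L2_shift_le(1)[of B v lam] almost_const_level_le[OF v G Gv B assms(10-12) dp(3)]
      unfolding B_def by (simp del: real_sqrt_le_1_iff)
  qed (use B assms(9) in \<open>auto simp: B_def intro: sum_nonneg\<close>)
  finally have bad: "\<bar>\<Sum>j\<in>B. x j * (v j - lam)\<bar> \<le> 3 * sqrt \<delta> * sqrt n"
    by (simp add: real_sqrt_mult mult_ac)
  have "\<bar>lam * real d\<bar> = (\<bar>lam\<bar> * sqrt n) * (p * sqrt n)" using dp by (simp add: abs_mult)
  moreover have "1/4 * (p * sqrt n) \<le> (\<bar>lam\<bar> * sqrt n) * (p * sqrt n)"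
    using large dp sn by (intro mult_right_mono) auto
  ultimately have "p * sqrt n / 4 \<le> \<bar>lam * real d\<bar>" by simp
  then have "p * sqrt n / 4 - p * \<rho> * sqrt n - 3 * sqrt \<delta> * sqrt n \<le> \<bar>\<Sum>j<n. x j * v j\<bar>"
    unfolding split using good bad by linarith
  moreover have "(p * \<rho> + 3 * sqrt \<delta>) * sqrt n \<le> p / 8 * sqrt n"
    using small sn by (intro mult_right_mono) auto
  ultimately show ?thesis by (simp add: algebra_simps)
qed

lemma almost_const_small_level_tail:
  assumes v: "(\<Sum>j<n. (v j)\<^sup>2) = 1" and G: "G \<subseteq> {..<n}" and Gv: "\<And>j. j \<in> G \<Longrightarrow> \<bar>v j - lam\<bar> \<le> \<rho> / sqrt n"
    and B: "real (card ({..<n} - G)) \<le> \<delta> * real n" and "0 \<le> \<delta>" "\<delta> \<le> 1/16" "0 \<le> \<rho>" "\<rho> \<le> 1/16"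
    and small: "\<bar>lam\<bar> * sqrt n < 1/4" and "0 < n"
  defines "B \<equiv> {..<n} - G"
  shows "(\<Sum>j\<in>B. \<bar>v j - lam\<bar>) \<le> 2 * sqrt \<delta> * sqrt n"
    and "87/100 \<le> sqrt (\<Sum>j\<in>B. (v j - lam)\<^sup>2)"
proof -
  have fB: "finite B" unfolding B_def by simp
  have sn: "0 < sqrt n" using assms by simp
  have cB: "sqrt (real (card B)) \<le> sqrt \<delta> * sqrt n"
    using B unfolding B_def by (simp add: real_sqrt_mult[symmetric])
  have "\<bar>lam\<bar> * sqrt (real (card B)) \<le> (\<bar>lam\<bar> * sqrt n) * sqrt \<delta>"
    using mult_left_mono[OF cB abs_ge_zero[of lam]] by (simp add: ac_simps)
  also have "\<dots> \<le> 1/4 * sqrt \<delta>" using small assms(5) by (intro mult_right_mono) auto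
  finally have lamB: "\<bar>lam\<bar> * sqrt (real (card B)) \<le> sqrt \<delta> / 4" by simp
  have sd: "sqrt \<delta> \<le> 1/4" using assms(6) real_sqrt_le_mono[of \<delta> "1/16"] by (simp add: real_sqrt_divide)
  have "sqrt (\<Sum>j\<in>B. (v j)\<^sup>2) \<le> 1"
    using v sum_mono2[of "{..<n}" B "\<lambda>j. (v j)\<^sup>2"] unfolding B_def by auto
  then have "sqrt (\<Sum>j\<in>B. (v j - lam)\<^sup>2) \<le> 2"
    using L2_shift_le(1)[OF fB, of v lam] lamB sd by linarith
  have "(\<Sum>j\<in>B. \<bar>v j - lam\<bar>) \<le> sqrt (real (card B)) * sqrt (\<Sum>j\<in>B. (v j - lam)\<^sup>2)"
    by (rule sum_abs_le_sqrt_card_mult)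
  also have "\<dots> \<le> (sqrt \<delta> * sqrt n) * 2"
    using cB \<open>sqrt (\<Sum>j\<in>B. (v j - lam)\<^sup>2) \<le> 2\<close> assms(5)
    by (intro mult_mono) (auto intro: sum_nonneg)
  finally show "(\<Sum>j\<in>B. \<bar>v j - lam\<bar>) \<le> 2 * sqrt \<delta> * sqrt n" by (simp add: ac_simps)
  have "(v j)\<^sup>2 \<le> (5/16 / sqrt n)\<^sup>2" if "j \<in> G" for j
  proof -
    have "\<bar>v j\<bar> \<le> (\<bar>lam\<bar> * sqrt n) / sqrt n + \<rho> / sqrt n" using Gv[OF that] sn by simp
    also have "\<dots> \<le> 1/4 / sqrt n + 1/16 / sqrt n"
      using small assms(8) sn by (intro add_mono divide_right_mono) auto
    finally have "\<bar>v j\<bar> \<le> 5/16 / sqrt n" by (simp add: add_divide_distrib[symmetric])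
    then show ?thesis using power_mono[of "\<bar>v j\<bar>" _ 2] by simp
  qed
  then have "(\<Sum>j\<in>G. (v j)\<^sup>2) \<le> (\<Sum>j\<in>G. (5/16 / sqrt n)\<^sup>2)" by (rule sum_mono)
  also have "\<dots> = real (card G) * (25/256) / real n" using assms(10) by (simp add: power_divide)
  also have "\<dots> \<le> real n * (25/256) / real n"
    using card_mono[OF _ G] by (intro divide_right_mono mult_right_mono) auto
  finally have "231/256 \<le> (\<Sum>j\<in>B. (v j)\<^sup>2)"
    using v sum_lessThan_split[OF G, of "\<lambda>j. (v j)\<^sup>2"] assms(10) unfolding B_def by simp
  then have "sqrt ((94/100)\<^sup>2) \<le> sqrt (\<Sum>j\<in>B. (v j)\<^sup>2)"
    by (intro real_sqrt_le_mono) (simp add: power2_eq_square)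
  then show "87/100 \<le> sqrt (\<Sum>j\<in>B. (v j - lam)\<^sup>2)"
    using L2_shift_le(2)[OF fB, of v lam] lamB sd by simp
qed

lemma almost_const_near_lattice_net:
  assumes v: "(\<Sum>j<n. (v j)\<^sup>2) = 1" and G: "G \<subseteq> {..<n}" and Gv: "\<And>j. j \<in> G \<Longrightarrow> \<bar>v j - lam\<bar> \<le> \<rho> / sqrt n"
    and B: "real (card ({..<n} - G)) \<le> \<delta> * real n" and "0 \<le> \<delta>" "\<delta> \<le> 1/16" "0 < \<rho>" "\<rho> \<le> 1/16"
    and small: "\<bar>lam\<bar> * sqrt n < 1/4" and "0 < n" and L: "2 * sqrt \<delta> * real n / \<rho> < real L + 1"
  shows "\<exists>b\<in>lattice_net n L \<rho>. 1/4 \<le> (\<Sum>j<n. (b j)\<^sup>2) \<and> (\<forall>j<n. \<bar>v j - lam - b j\<bar> \<le> \<rho> / sqrt n)"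
proof -
  define B where "B = {..<n} - G"
  define w where "w j = (if j \<in> B then v j - lam else 0)" for j
  have sn: "0 < sqrt n" using assms by simp
  note tail = almost_const_small_level_tail[OF v G Gv B assms(5,6) less_imp_le[OF assms(7)] assms(8-10),
      folded B_def]
  have w_sum: "(\<Sum>j<n. f (w j)) = (\<Sum>j\<in>B. f (v j - lam)) + (\<Sum>j\<in>G. f 0)" for f :: "real \<Rightarrow> real"
    using sum_lessThan_split[OF G, of "\<lambda>j. f (w j)"] unfolding w_def B_def by (simp add: add.commute)
  have "(\<Sum>j<n. \<bar>w j\<bar>) * sqrt n / \<rho> \<le> (2 * sqrt \<delta> * sqrt n) * sqrt n / \<rho>"
    using tail(1) w_sum[of abs] assms(7) by (intro divide_right_mono mult_right_mono) auto
  also have "\<dots> = 2 * sqrt \<delta> * (sqrt n * sqrt n) / \<rho>" by (simp only: mult.assoc)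
  also have "sqrt n * sqrt n = real n" by simp
  finally have "(\<Sum>j<n. \<bar>w j\<bar>) * sqrt n / \<rho> < real L + 1" using L by linarith
  then obtain b where b: "b \<in> lattice_net n L \<rho>" and wb: "\<forall>j<n. \<bar>w j - b j\<bar> \<le> \<rho> / sqrt n"
    and b0: "\<forall>j<n. w j = 0 \<longrightarrow> b j = 0"
    using lattice_net_approx[OF assms(7,10)] by blast
  have close: "\<bar>v j - lam - b j\<bar> \<le> \<rho> / sqrt n" if "j < n" for j
    using that wb b0 Gv unfolding w_def B_def by (cases "j \<in> G") auto
  have "(\<Sum>j\<in>G. (w j - b j)\<^sup>2) = 0" using b0 G unfolding w_def B_def by (auto intro!: sum.neutral)
  moreover have "(w j - b j)\<^sup>2 \<le> (\<rho> / sqrt n)\<^sup>2" if "j < n" for j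
    using power_mono[OF wb[rule_format, OF that] abs_ge_zero, of 2] by simp
  then have "(\<Sum>j\<in>B. (w j - b j)\<^sup>2) \<le> (\<Sum>j\<in>B. (\<rho> / sqrt n)\<^sup>2)"
    unfolding B_def by (intro sum_mono) auto
  ultimately have "(\<Sum>j<n. (w j - b j)\<^sup>2) \<le> (\<Sum>j\<in>B. (\<rho> / sqrt n)\<^sup>2)"
    using sum_lessThan_split[OF G, of "\<lambda>j. (w j - b j)\<^sup>2"] unfolding B_def by simp
  also have "\<dots> = real (card B) * \<rho>\<^sup>2 / real n" by (simp add: power_divide)
  also have "\<dots> \<le> \<delta> * real n * \<rho>\<^sup>2 / real n"
    using B unfolding B_def by (intro divide_right_mono mult_right_mono) auto
  also have "\<dots> = \<delta> * \<rho>\<^sup>2" using assms(10) by simp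
  also have "\<dots> \<le> 1/16 * (1/16)\<^sup>2"
    using assms(5-8) by (intro mult_mono power_mono) auto
  finally have "(\<Sum>j<n. (w j - b j)\<^sup>2) \<le> (1/64)\<^sup>2" by (simp add: power2_eq_square)
  then have "sqrt (\<Sum>j<n. (w j - b j)\<^sup>2) \<le> sqrt ((1/64)\<^sup>2)" by (rule real_sqrt_le_mono)
  moreover have "sqrt (\<Sum>j<n. (w j)\<^sup>2) \<le> sqrt (\<Sum>j<n. (b j)\<^sup>2) + sqrt (\<Sum>j<n. (w j - b j)\<^sup>2)"
    using L2_set_triangle_ineq[of b "\<lambda>j. w j - b j" "{..<n}"] by (simp add: L2_set_def)
  moreover have "sqrt (\<Sum>j<n. (w j)\<^sup>2) = sqrt (\<Sum>j\<in>B. (v j - lam)\<^sup>2)" using w_sum[of power2] by simp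
  ultimately have "1/2 \<le> sqrt (\<Sum>j<n. (b j)\<^sup>2)" using tail(2) by simp
  then have "1/4 \<le> (\<Sum>j<n. (b j)\<^sup>2)"
    by (metis real_sqrt_le_iff real_sqrt_four real_sqrt_divide real_sqrt_one)
  then show ?thesis using b close by blast
qed

lemma sum_abs_rows_ge_of_good_matrix:
  assumes M: "M \<in> slice_matrices m n d" and dp: "real d = p * real n" and "0 < n"
    and close: "\<And>j. j < n \<Longrightarrow> \<bar>v j - lam - b j\<bar> \<le> \<rho> / sqrt n" and b: "(\<Sum>j<n. \<bar>b j\<bar>) \<le> sqrt n / 2"
    and signs: "\<forall>\<sigma>\<in>sign_vectors n. (\<Sum>i<m. \<bar>centered_sum n p \<sigma> (M i)\<bar>) < 20 * real m * sqrt n"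
    and spread: "\<forall>t\<in>grid \<kappa> n. 2 * \<kappa> * real m < (\<Sum>i<m. \<bar>(\<Sum>j<n. M i j * b j) - t\<bar>)"
    and "0 < \<kappa>" "\<kappa> \<le> 1/2" "0 \<le> \<rho>"
  shows "\<kappa> * real m - 20 * \<rho> * real m \<le> (\<Sum>i<m. \<bar>\<Sum>j<n. M i j * v j\<bar>)"
proof -
  define e where "e j = v j - lam - b j" for j
  define t where "t = - (lam * real d + p * (\<Sum>j<n. e j))"
  define a where "a i = (\<Sum>j<n. M i j * b j)" for i
  define r where "r i = (\<Sum>j<n. (M i j - p) * e j)" for i
  have sn: "0 < sqrt n" using assms by simp
  have split: "(\<Sum>j<n. M i j * v j) = (a i - t) + r i" if "i < m" for i
  proof -
    have "(\<Sum>j<n. M i j * v j) = (\<Sum>j<n. lam * M i j + M i j * b j + ((M i j - p) * e j + p * e j))"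
      unfolding e_def by (intro sum.cong refl) (simp add: algebra_simps)
    also have "\<dots> = lam * (\<Sum>j<n. M i j) + a i + (r i + p * (\<Sum>j<n. e j))"
      unfolding a_def r_def by (simp add: sum.distrib sum_distrib_left)
    finally show ?thesis
      unfolding t_def slice_vector_sum[OF slice_matrix_row[OF M that]] by simp
  qed
  have "0 \<le> \<rho> / sqrt n" using assms(10) by simp
  then obtain \<sigma> where \<sigma>: "\<sigma> \<in> sign_vectors n"
    and r: "(\<Sum>i<m. \<bar>r i\<bar>) \<le> \<rho> / sqrt n * (\<Sum>i<m. \<bar>\<Sum>j<n. (M i j - p) * \<sigma> j\<bar>)"
    using sum_abs_le_sign_vector[of "\<rho> / sqrt n" n e "\<lambda>i j. M i j - p" m] close
    unfolding r_def e_def by blast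
  have "(\<Sum>i<m. \<bar>\<Sum>j<n. (M i j - p) * \<sigma> j\<bar>) \<le> 20 * real m * sqrt n"
    using bspec[OF signs \<sigma>] unfolding centered_sum_def by (simp add: mult.commute)
  then have "(\<Sum>i<m. \<bar>r i\<bar>) \<le> \<rho> / sqrt n * (20 * real m * sqrt n)"
    using r \<open>0 \<le> \<rho> / sqrt n\<close> by (meson mult_left_mono order_trans)
  then have R: "(\<Sum>i<m. \<bar>r i\<bar>) \<le> 20 * \<rho> * real m" using sn by simp
  have A: "\<kappa> * real m \<le> (\<Sum>i<m. \<bar>a i - t\<bar>)"
  proof (cases "\<bar>t\<bar> \<le> sqrt n")
    case True
    then obtain s where "s \<in> grid \<kappa> n" "\<bar>s - t\<bar> \<le> \<kappa>" using grid_approx[OF assms(8)] by blast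
    then have "2 * \<kappa> * real m < (\<Sum>i<m. \<bar>a i - s\<bar>)" using spread unfolding a_def by blast
    also have "\<dots> \<le> (\<Sum>i<m. \<bar>a i - t\<bar> + \<kappa>)" using \<open>\<bar>s - t\<bar> \<le> \<kappa>\<close> by (intro sum_mono) linarith
    finally show ?thesis by (simp add: sum.distrib)
  next
    case False
    have "\<kappa> \<le> \<bar>a i - t\<bar>" if "i < m" for i
    proof -
      have "\<bar>M i j * b j\<bar> \<le> \<bar>b j\<bar>" for j
        using slice_vector_01[OF slice_matrix_row[OF M that], of j] by auto
      then have "\<bar>a i\<bar> \<le> (\<Sum>j<n. \<bar>b j\<bar>)" unfolding a_def by (intro order_trans[OF sum_abs] sum_mono)
      moreover have "1 \<le> sqrt n" using assms(3) by simp
      ultimately show ?thesis using False b assms(9) by linarith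
    qed
    then show ?thesis using sum_mono[of "{..<m}" "\<lambda>_. \<kappa>"] by (simp add: mult.commute)
  qed
  have "(\<Sum>i<m. \<bar>a i - t\<bar> - \<bar>r i\<bar>) \<le> (\<Sum>i<m. \<bar>\<Sum>j<n. M i j * v j\<bar>)"
    using split by (intro sum_mono) auto
  then show ?thesis using A R by (simp add: sum_subtractf)
qed

lemma matvec_norm_ge_row:
  assumes "i < m"
  shows "\<bar>\<Sum>j<n. M i j * v j\<bar> \<le> matvec_norm m n M v"
proof -
  have "(\<Sum>j<n. M i j * v j)\<^sup>2 \<le> (\<Sum>i<m. (\<Sum>j<n. M i j * v j)\<^sup>2)"
    using assms by (intro member_le_sum) auto
  then show ?thesis unfolding matvec_norm_def by (metis real_sqrt_abs real_sqrt_le_mono)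
qed

lemma matvec_norm_ge_sum_abs:
  "0 < m \<Longrightarrow> (\<Sum>i<m. \<bar>\<Sum>j<n. M i j * v j\<bar>) / sqrt m \<le> matvec_norm m n M v"
  using sum_abs_le_sqrt_card_mult[of "\<lambda>i. \<Sum>j<n. M i j * v j" "{..<m}"]
  unfolding matvec_norm_def by (simp add: divide_le_eq mult.commute)

lemma matvec_norm_ge_of_good_matrix:
  assumes "0 < p" and dp: "real d = p * real n" and "0 < n" "0 < m"
    and M: "M \<in> slice_matrices m n d" and v: "v \<in> almost_const \<delta> \<rho> n"
    and "0 \<le> \<delta>" "\<delta> \<le> 1/16" "0 < \<rho>" "\<rho> \<le> 1/16" "0 < \<kappa>" "\<kappa> \<le> 1/2" "40 * \<rho> \<le> \<kappa>"
    and "p * \<rho> + 3 * sqrt \<delta> \<le> p / 8"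
    and L: "2 * sqrt \<delta> * real n / \<rho> < real L + 1" "\<rho> * real L \<le> real n / 2"
    and signs: "\<forall>\<sigma>\<in>sign_vectors n. (\<Sum>i<m. \<bar>centered_sum n p \<sigma> (M i)\<bar>) < 20 * real m * sqrt n"
    and spread: "\<forall>b\<in>lattice_net n L \<rho>. 1/4 \<le> (\<Sum>j<n. (b j)\<^sup>2) \<longrightarrow>
      (\<forall>t\<in>grid \<kappa> n. 2 * \<kappa> * real m < (\<Sum>i<m. \<bar>(\<Sum>j<n. M i j * b j) - t\<bar>))"
  shows "min (p * sqrt n / 8) (\<kappa> * sqrt m / 2) \<le> matvec_norm m n M v"
proof -
  obtain G lam where G: "G \<subseteq> {..<n}" and Gv: "\<And>j. j \<in> G \<Longrightarrow> \<bar>v j - lam\<bar> \<le> \<rho> / sqrt n"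
    and B: "real (card ({..<n} - G)) \<le> \<delta> * real n" and v1: "(\<Sum>j<n. (v j)\<^sup>2) = 1"
    using almost_const_decompose[OF v] by blast
  have sn: "0 < sqrt n" using assms by simp
  show ?thesis
  proof (cases "1/4 \<le> \<bar>lam\<bar> * sqrt n")
    case True
    have "p * sqrt n / 8 \<le> \<bar>\<Sum>j<n. M 0 j * v j\<bar>"
      using slice_inner_ge_of_large_level[OF slice_matrix_row[OF M \<open>0 < m\<close>] dp \<open>0 < p\<close> \<open>0 < n\<close> v1 G Gv B
          \<open>0 \<le> \<delta>\<close> _ less_imp_le[OF \<open>0 < \<rho>\<close>] \<open>\<rho> \<le> 1/16\<close> True] assms(8,14) by simp
    also have "\<dots> \<le> matvec_norm m n M v" using \<open>0 < m\<close> by (rule matvec_norm_ge_row)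
    finally show ?thesis by simp
  next
    case False
    then obtain b where b: "b \<in> lattice_net n L \<rho>" "1/4 \<le> (\<Sum>j<n. (b j)\<^sup>2)"
      and close: "\<forall>j<n. \<bar>v j - lam - b j\<bar> \<le> \<rho> / sqrt n"
      using almost_const_near_lattice_net[OF v1 G Gv B assms(7-10) _ \<open>0 < n\<close> L(1)] by auto
    have "(\<Sum>j<n. \<bar>b j\<bar>) \<le> \<rho> / sqrt n * real L"
      using lattice_net_sum_abs_le[OF b(1)] assms(9) by simp
    also have "\<dots> = \<rho> * real L / sqrt n" by simp
    also have "\<dots> \<le> real n / 2 / sqrt n" using L(2) sn by (intro divide_right_mono) auto
    also have "\<dots> = sqrt n / 2" by (simp add: real_div_sqrt)
    finally have b1: "(\<Sum>j<n. \<bar>b j\<bar>) \<le> sqrt n / 2" .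
    have "\<kappa> * real m - 20 * \<rho> * real m \<le> (\<Sum>i<m. \<bar>\<Sum>j<n. M i j * v j\<bar>)"
      by (rule sum_abs_rows_ge_of_good_matrix[OF M dp \<open>0 < n\<close> _ b1 signs _ assms(11,12)])
        (use close bspec[OF spread b(1)] b(2) assms(9) in auto)
    then have "\<kappa> * real m / 2 \<le> (\<Sum>i<m. \<bar>\<Sum>j<n. M i j * v j\<bar>)"
      using assms(13) mult_right_mono[OF assms(13), of "real m"] by linarith
    then have "\<kappa> * real m / 2 / sqrt m \<le> matvec_norm m n M v"
      using matvec_norm_ge_sum_abs[OF \<open>0 < m\<close>, where M = M and v = v and n = n] \<open>0 < m\<close>
      by (meson divide_right_mono order_trans real_sqrt_ge_zero of_nat_0_le_iff)
    moreover have "\<kappa> * real m / 2 / sqrt m = \<kappa> / 2 * (real m / sqrt m)" by simp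
    moreover have "real m / sqrt m = sqrt m" by (rule real_div_sqrt) simp
    ultimately show ?thesis by simp
  qed
qed

lemma card_bad_sign_matrices_le:
  assumes "d \<le> n" "0 < n"
  shows "real (card (\<Union>\<sigma>\<in>sign_vectors n. {M \<in> slice_matrices m n d.
      20 * real m * sqrt n \<le> (\<Sum>i<m. \<bar>centered_sum n (real d / real n) \<sigma> (M i)\<bar>)}))
    \<le> 2 ^ n * exp (- 8 * real m) * real (card (slice_matrices m n d))"
proof -
  let ?E = "\<lambda>\<sigma>. {M \<in> slice_matrices m n d. 20 * real m * sqrt n \<le> (\<Sum>i<m. \<bar>centered_sum n (real d / real n) \<sigma> (M i)\<bar>)}"
  have "real (card (\<Union>\<sigma>\<in>sign_vectors n. ?E \<sigma>)) \<le> (\<Sum>\<sigma>\<in>sign_vectors n. real (card (?E \<sigma>)))"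
    using card_UN_le[OF finite_sign_vectors, of ?E] by (simp flip: of_nat_sum)
  also have "\<dots> \<le> (\<Sum>\<sigma>\<in>sign_vectors n. exp (- 8 * real m) * real (card (slice_matrices m n d)))"
    using assms by (intro sum_mono card_slice_matrices_sign_deviation_ge)
  also have "\<dots> = 2 ^ n * exp (- 8 * real m) * real (card (slice_matrices m n d))"
    by (simp add: card_sign_vectors)
  finally show ?thesis .
qed

lemma card_bad_spread_matrices_le:
  assumes "2 \<le> d" "d < n" "finite N" "finite T"
    and N: "\<And>b. b \<in> N \<Longrightarrow> 1/4 \<le> (\<Sum>j<n. (b j)\<^sup>2) \<and> (\<Sum>j<n. b j)\<^sup>2 \<le> real n / 64"
  defines "p \<equiv> real d / real n"
  defines "\<tau> \<equiv> sqrt (p * (1 - p)) / 4" and "\<eta> \<equiv> (p * (1 - p))\<^sup>2 / 10^8"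
  shows "real (card (\<Union>b\<in>N. \<Union>t\<in>T. {M \<in> slice_matrices m n d.
      (\<Sum>i<m. \<bar>(\<Sum>j<n. M i j * b j) - t\<bar>) \<le> \<eta> * \<tau> / 4 * real m}))
    \<le> real (card N) * real (card T) * exp (- \<eta> * real m / 4) * real (card (slice_matrices m n d))"
proof -
  let ?E = "\<lambda>b t. {M \<in> slice_matrices m n d. (\<Sum>i<m. \<bar>(\<Sum>j<n. M i j * b j) - t\<bar>) \<le> \<eta> * \<tau> / 4 * real m}"
  have "real (card (\<Union>b\<in>N. \<Union>t\<in>T. ?E b t)) \<le> (\<Sum>b\<in>N. \<Sum>t\<in>T. real (card (?E b t)))"
  proof -
    have "card (\<Union>b\<in>N. \<Union>t\<in>T. ?E b t) \<le> (\<Sum>b\<in>N. card (\<Union>t\<in>T. ?E b t))" by (rule card_UN_le[OF assms(3)])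
    also have "\<dots> \<le> (\<Sum>b\<in>N. \<Sum>t\<in>T. card (?E b t))" by (intro sum_mono card_UN_le[OF assms(4)])
    finally show ?thesis by (simp flip: of_nat_sum)
  qed
  also have "\<dots> \<le> (\<Sum>b\<in>N. \<Sum>t\<in>T. exp (- \<eta> * real m / 4) * real (card (slice_matrices m n d)))"
    using N assms(1,2) unfolding p_def \<tau>_def \<eta>_def by (intro sum_mono card_slice_matrices_affine_small_le) auto
  also have "\<dots> = real (card N) * real (card T) * exp (- \<eta> * real m / 4) * real (card (slice_matrices m n d))"
    by simp
  finally show ?thesis .
qed

lemma card_lattice_net_le_exp_small:
  assumes "0 < \<eta>" "\<eta> \<le> 1" "0 < n" and L: "real L \<le> \<eta>\<^sup>2 / 12288 * real n"
  shows "real (card (lattice_net n L \<epsilon>)) \<le> exp (\<eta> * real n / 32)"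
proof -
  define \<gamma> where "\<gamma> = \<eta> / 64"
  have \<gamma>: "0 < \<gamma>" "\<gamma> \<le> 3" "1 \<le> 3 / \<gamma>" using assms unfolding \<gamma>_def by auto
  have "\<eta>\<^sup>2 / 12288 * real n \<le> 1 * real n"
    using assms power_le_one[of \<eta> 2] by (intro mult_right_mono) auto
  then have "L \<le> n" using L by linarith
  have "(3 / \<gamma>) ^ L = exp (real L * ln (3 / \<gamma>))" using \<gamma> by (simp add: exp_of_nat_mult)
  also have "real L * ln (3 / \<gamma>) \<le> (\<eta>\<^sup>2 / 12288 * real n) * (3 / \<gamma>)"
    using L \<gamma> ln_le_minus_one[of "3 / \<gamma>"] by (intro mult_mono) auto
  also have "(\<eta>\<^sup>2 / 12288 * real n) * (3 / \<gamma>) = \<eta> * real n / 64"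
    unfolding \<gamma>_def using assms by (simp add: power2_eq_square field_simps)
  finally have "(3 / \<gamma>) ^ L \<le> exp (\<eta> * real n / 64)" by simp
  then have "real (card (lattice_net n L \<epsilon>)) \<le> exp (\<eta> * real n / 64) * exp (\<gamma> * real n)"
    using order_trans[OF card_lattice_net_le_exp[OF \<open>L \<le> n\<close> \<gamma>(1,2) assms(3)] mult_right_mono] by simp
  also have "\<dots> = exp (\<eta> * real n / 32)" unfolding \<gamma>_def by (simp flip: exp_add)
  finally show ?thesis .
qed

lemma card_grid_le_exp_small:
  assumes "0 < \<eta>" "0 < \<kappa>" "\<kappa> \<le> 1" "0 < n" and large: "10240 / (\<eta>\<^sup>2 * \<kappa>) \<le> real n"
  shows "real (card (grid \<kappa> n)) \<le> exp (\<eta> * real n / 32)"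
proof -
  have "sqrt n \<le> real n" using assms(4) by (simp add: real_sqrt_le_iff' power2_eq_square)
  then have "2 * sqrt n / \<kappa> \<le> 2 * real n / \<kappa>" using assms(2) by (intro divide_right_mono) auto
  moreover have "3 \<le> 3 * real n / \<kappa>" using assms(2-4) by (simp add: le_divide_eq)
  moreover have "2 * real n / \<kappa> + 3 * real n / \<kappa> = 5 * real n / \<kappa>" by (simp add: field_simps)
  ultimately have "2 * sqrt n / \<kappa> + 3 \<le> 5 * real n / \<kappa>" by linarith
  also have "5 * real n / \<kappa> \<le> (\<eta> * real n / 32) ^ 2 / fact 2"
  proof -
    have "10240 \<le> real n * (\<eta>\<^sup>2 * \<kappa>)" using large assms by (simp add: divide_le_eq)
    then have "10240 * real n \<le> (real n * (\<eta>\<^sup>2 * \<kappa>)) * real n" by (intro mult_right_mono) auto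
    then show ?thesis using assms(2) by (simp add: power2_eq_square field_simps)
  qed
  also have "\<dots> \<le> exp (\<eta> * real n / 32)" using assms by (intro power_div_fact_le_exp) simp
  finally show ?thesis using card_grid_le[OF assms(2), of n] by linarith
qed

lemma failure_bound_le_exp:
  assumes "0 < \<eta>" "\<eta> \<le> 1" "0 < \<kappa>" "\<kappa> \<le> 1" "0 < n" "real n \<le> 2 * real m"
    and L: "real L \<le> \<eta>\<^sup>2 / 12288 * real n"
    and large: "32 / \<eta> \<le> real n" "10240 / (\<eta>\<^sup>2 * \<kappa>) \<le> real n"
  shows "2 ^ n * exp (- 8 * real m)
      + real (card (lattice_net n L \<epsilon>)) * real (card (grid \<kappa> n)) * exp (- \<eta> * real m / 4)
    \<le> exp (- (\<eta> / 32) * real n)"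
proof -
  have "(2::real) ^ n \<le> exp 1 ^ n" using exp_ge_add_one_self[of "1::real"] by (intro power_mono) auto
  then have "2 ^ n * exp (- 8 * real m) \<le> exp (real n) * exp (- 4 * real n)"
    using assms(6) by (intro mult_mono) (auto simp flip: exp_of_nat_mult)
  also have "\<dots> \<le> exp (- \<eta> * real n / 16)" using assms(2) mult_right_mono[OF assms(2), of "real n"]
    by (simp flip: exp_add)
  finally have signs: "2 ^ n * exp (- 8 * real m) \<le> exp (- \<eta> * real n / 16)" .
  have "real (card (lattice_net n L \<epsilon>)) * real (card (grid \<kappa> n)) * exp (- \<eta> * real m / 4)
      \<le> exp (\<eta> * real n / 32) * exp (\<eta> * real n / 32) * exp (- \<eta> * real n / 8)"
    using card_lattice_net_le_exp_small[OF assms(1,2,5) L] card_grid_le_exp_small[OF assms(1,3-5) large(2)]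
      mult_left_mono[OF assms(6) less_imp_le[OF assms(1)]]
    by (intro mult_mono) auto
  also have "\<dots> = exp (- \<eta> * real n / 16)" by (simp flip: exp_add)
  finally have spread: "real (card (lattice_net n L \<epsilon>)) * real (card (grid \<kappa> n)) * exp (- \<eta> * real m / 4)
      \<le> exp (- \<eta> * real n / 16)" .
  have "1 \<le> \<eta> * real n / 32" using large(1) assms(1) by (simp add: divide_le_eq mult.commute)
  then have "2 \<le> exp (\<eta> * real n / 32)" using exp_ge_add_one_self[of "\<eta> * real n / 32"] by linarith
  then have "2 * exp (- \<eta> * real n / 16) \<le> exp (\<eta> * real n / 32) * exp (- \<eta> * real n / 16)"
    by (intro mult_right_mono) auto
  also have "\<dots> = exp (- (\<eta> / 32) * real n)" by (simp flip: exp_add)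
  finally show ?thesis using signs spread by linarith
qed

lemma almost_const_nonempty:
  assumes "0 < n" "0 \<le> \<delta>" "0 \<le> \<rho>"
  shows "almost_const \<delta> \<rho> n \<noteq> {}"
proof -
  define v :: "nat \<Rightarrow> real" where "v j = (if j < n then 1 / sqrt n else 0)" for j
  have "v \<in> unit_sphere n" unfolding unit_sphere_def v_def using assms by (simp add: power_divide)
  moreover have "{i. i < n \<and> \<bar>v i - 1 / sqrt n\<bar> \<le> \<rho> / sqrt n} = {..<n}"
    unfolding v_def using assms by auto
  then have "(1 - \<delta>) * real n \<le> real (card {i. i < n \<and> \<bar>v i - 1 / sqrt n\<bar> \<le> \<rho> / sqrt n})"
    using assms by (simp add: algebra_simps)
  ultimately show ?thesis unfolding almost_const_def by blast
qed

lemma small_inf_matvec_imp_bad: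
  assumes "0 < p" "p \<le> 1" and dp: "real d = p * real n" and "0 < n" "0 < m" "real n \<le> 2 * real m"
    and M: "M \<in> slice_matrices m n d"
    and "0 \<le> \<delta>" "\<delta> \<le> 1/16" "0 < \<rho>" "\<rho> \<le> 1/16" "0 < \<kappa>" "\<kappa> < sqrt p / 2" "40 * \<rho> \<le> \<kappa>"
    and "p * \<rho> + 3 * sqrt \<delta> \<le> p / 8"
    and "2 * sqrt \<delta> * real n / \<rho> < real L + 1" "\<rho> * real L \<le> real n / 2"
    and small: "(INF v\<in>almost_const \<delta> \<rho> n. matvec_norm m n M v) \<le> \<kappa> / 4 * sqrt (p * real n)"
  shows "(\<exists>\<sigma>\<in>sign_vectors n. 20 * real m * sqrt n \<le> (\<Sum>i<m. \<bar>centered_sum n p \<sigma> (M i)\<bar>))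
    \<or> (\<exists>b\<in>lattice_net n L \<rho>. 1/4 \<le> (\<Sum>j<n. (b j)\<^sup>2) \<and>
          (\<exists>t\<in>grid \<kappa> n. (\<Sum>i<m. \<bar>(\<Sum>j<n. M i j * b j) - t\<bar>) \<le> 2 * \<kappa> * real m))"
proof (rule ccontr)
  assume "\<not> ?thesis"
  have "sqrt p \<le> 1" using assms(2) by simp
  then have "\<kappa> \<le> 1/2" using assms(13) by linarith
  with \<open>\<not> ?thesis\<close> have "min (p * sqrt n / 8) (\<kappa> * sqrt m / 2) \<le> matvec_norm m n M v"
    if "v \<in> almost_const \<delta> \<rho> n" for v
    using assms that sqrt_le_D[of "\<kappa>\<^sup>2"] by (intro matvec_norm_ge_of_good_matrix) (auto simp: not_le)
  then have "min (p * sqrt n / 8) (\<kappa> * sqrt m / 2) \<le> (INF v\<in>almost_const \<delta> \<rho> n. matvec_norm m n M v)"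
    using almost_const_nonempty[of n \<delta> \<rho>] assms by (intro cINF_greatest) auto
  moreover have "\<kappa> / 4 * sqrt (p * real n) < min (p * sqrt n / 8) (\<kappa> * sqrt m / 2)"
  proof -
    have "\<kappa> * 2 * sqrt p < sqrt p * sqrt p" using assms(1,13) by (intro mult_strict_right_mono) auto
    then have "\<kappa> * sqrt p * (sqrt n / 4) < p / 2 * (sqrt n / 4)"
      using assms(1,4) by (intro mult_strict_right_mono) auto
    moreover have "sqrt (p * real n) \<le> sqrt n"
      using mult_right_mono[OF assms(2), of "real n"] by simp
    moreover have "sqrt n \<le> sqrt 2 * sqrt m" using assms(6) by (simp flip: real_sqrt_mult)
    moreover have "sqrt 2 * sqrt m < 2 * sqrt m" using sqrt2_less_2 assms(5) by simp
    ultimately show ?thesis using assms(12) by (simp add: real_sqrt_mult)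
  qed
  ultimately show False using small by linarith
qed

lemma slice_constants_bounds:
  assumes "0 < p" "p \<le> 1/2"
    and \<eta>: "\<eta> = (p * (1 - p))\<^sup>2 / 10^8" and \<kappa>: "\<kappa> = \<eta> * sqrt (p * (1 - p)) / 32"
  shows "0 < \<eta>" "\<eta> \<le> p" "0 < \<kappa>" "\<kappa> \<le> \<eta> / 64"
proof -
  have q: "0 < p * (1 - p)" "p * (1 - p) \<le> 1/4" "p * (1 - p) \<le> p"
    using assms bernoulli_variance_le[of p] by (auto simp: algebra_simps)
  then have "(p * (1 - p))\<^sup>2 \<le> p * (1 - p)"
    using mult_left_le_one_le[of "p * (1 - p)" "p * (1 - p)"] by (simp add: power2_eq_square)
  then show "0 < \<eta>" "\<eta> \<le> p" unfolding \<eta> using q by auto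
  moreover have "sqrt (p * (1 - p)) \<le> sqrt ((1/2)\<^sup>2)"
    using q by (intro real_sqrt_le_mono) (simp add: power2_eq_square)
  ultimately show "0 < \<kappa>" "\<kappa> \<le> \<eta> / 64" unfolding \<kappa> using q by (auto simp: mult_left_le)
qed

lemma prob_small_inf_matvec_le:
  assumes p: "0 < p" "p \<le> 1/2" and dp: "real d = p * real n" and "2 \<le> d" "real n \<le> 2 * real m"
    and \<eta>: "\<eta> = (p * (1 - p))\<^sup>2 / 10^8" and \<kappa>: "\<kappa> = \<eta> * sqrt (p * (1 - p)) / 32"
    and "0 < \<rho>" "40 * \<rho> \<le> \<kappa>" "0 \<le> \<delta>" "p * \<rho> + 3 * sqrt \<delta> \<le> p / 8"
    and L: "2 * sqrt \<delta> * real n / \<rho> < real L + 1" "real L \<le> \<eta>\<^sup>2 / 12288 * real n"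
    and large: "32 / \<eta> \<le> real n" "10240 / (\<eta>\<^sup>2 * \<kappa>) \<le> real n"
  shows "measure_pmf.prob (random_slice_matrix m n d)
      {M. (INF v\<in>almost_const \<delta> \<rho> n. matvec_norm m n M v) \<le> \<kappa> / 4 * sqrt (p * real n)}
    \<le> exp (- (\<eta> / 32) * real n)"
proof -
  note K = slice_constants_bounds[OF p \<eta> \<kappa>]
  define SM where "SM = slice_matrices m n d"
  define N where "N = {b \<in> lattice_net n L \<rho>. 1/4 \<le> (\<Sum>j<n. (b j)\<^sup>2)}"
  define Bad1 where "Bad1 = (\<Union>\<sigma>\<in>sign_vectors n. {M \<in> SM.
    20 * real m * sqrt n \<le> (\<Sum>i<m. \<bar>centered_sum n (real d / real n) \<sigma> (M i)\<bar>)})"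
  define Bad2 where "Bad2 = (\<Union>b\<in>N. \<Union>t\<in>grid \<kappa> n. {M \<in> SM.
    (\<Sum>i<m. \<bar>(\<Sum>j<n. M i j * b j) - t\<bar>) \<le> \<eta> * (sqrt (p * (1 - p)) / 4) / 4 * real m})"
  have n: "0 < n" "d < n" using assms mult_right_mono[OF p(2), of "real n"] by auto
  have pd: "p = real d / real n" using dp n by simp
  have "sqrt p \<le> 1" using p by simp
  then have "p \<le> sqrt p" using mult_right_mono[of "sqrt p" 1 "sqrt p"] p by simp
  have \<rho>: "\<rho> \<le> 1/16" using assms(9) K(2,4) p by linarith
  have "0 \<le> p * \<rho>" using p assms(8) by simp
  then have "sqrt \<delta> \<le> 1/4" using assms(11) p by linarith
  then have \<delta>: "\<delta> \<le> 1/16" using sqrt_le_D[of \<delta> "1/4"] by (simp add: power2_eq_square)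
  have \<kappa>': "\<kappa> < sqrt p / 2" using K(2,4) p \<open>p \<le> sqrt p\<close> by linarith
  have "\<eta>\<^sup>2 / 12288 * real n \<le> 1 * real n"
    using K p power_le_one[of \<eta> 2] by (intro mult_right_mono) auto
  then have "\<rho> * real L \<le> 1/16 * real n" using \<rho> L(2) assms(8) by (intro mult_mono) auto
  then have \<rho>L: "\<rho> * real L \<le> real n / 8" by simp
  have thr: "2 * \<kappa> * real m = \<eta> * (sqrt (p * (1 - p)) / 4) / 4 * real m" unfolding \<kappa> by simp
  have sub: "{M \<in> SM. (INF v\<in>almost_const \<delta> \<rho> n. matvec_norm m n M v) \<le> \<kappa> / 4 * sqrt (p * real n)}
      \<subseteq> Bad1 \<union> Bad2"
  proof
    fix M assume "M \<in> {M \<in> SM. (INF v\<in>almost_const \<delta> \<rho> n. matvec_norm m n M v) \<le> \<kappa> / 4 * sqrt (p * real n)}"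
    then have M: "M \<in> SM" and "(INF v\<in>almost_const \<delta> \<rho> n. matvec_norm m n M v) \<le> \<kappa> / 4 * sqrt (p * real n)"
      by auto
    then have "(\<exists>\<sigma>\<in>sign_vectors n. 20 * real m * sqrt n \<le> (\<Sum>i<m. \<bar>centered_sum n p \<sigma> (M i)\<bar>))
      \<or> (\<exists>b\<in>lattice_net n L \<rho>. 1/4 \<le> (\<Sum>j<n. (b j)\<^sup>2) \<and>
          (\<exists>t\<in>grid \<kappa> n. (\<Sum>i<m. \<bar>(\<Sum>j<n. M i j * b j) - t\<bar>) \<le> 2 * \<kappa> * real m))"
      using \<rho>L assms(4,5) n(1) p
      by (intro small_inf_matvec_imp_bad[OF p(1) _ dp n(1) _ assms(5) M[unfolded SM_def] assms(10) \<delta> assms(8) \<rho>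
          K(3) \<kappa>' assms(9,11) L(1)]) auto
    then show "M \<in> Bad1 \<union> Bad2" using M unfolding Bad1_def Bad2_def N_def pd[symmetric] thr by blast
  qed
  have "(\<Sum>j<n. b j)\<^sup>2 \<le> real n / 64" if "b \<in> N" for b
  proof -
    have "\<bar>\<Sum>j<n. b j\<bar> \<le> \<rho> / sqrt n * real L"
      using order_trans[OF sum_abs lattice_net_sum_abs_le] that assms(8) unfolding N_def by auto
    also have "\<dots> = \<rho> * real L / sqrt n" by simp
    also have "\<dots> \<le> real n / 8 / sqrt n" using \<rho>L by (intro divide_right_mono) auto
    also have "\<dots> = sqrt n / 8" by (simp add: real_div_sqrt)
    finally have "\<bar>\<Sum>j<n. b j\<bar>\<^sup>2 \<le> (sqrt n / 8)\<^sup>2" by (intro power_mono) auto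
    then show ?thesis by (simp add: power_divide)
  qed
  then have "1/4 \<le> (\<Sum>j<n. (b j)\<^sup>2) \<and> (\<Sum>j<n. b j)\<^sup>2 \<le> real n / 64" if "b \<in> N" for b
    using that unfolding N_def by auto
  moreover have "finite N" unfolding N_def using finite_lattice_net by simp
  ultimately have "real (card Bad2) \<le> real (card N) * real (card (grid \<kappa> n)) * exp (- \<eta> * real m / 4)
      * real (card SM)"
    using card_bad_spread_matrices_le[OF assms(4) n(2) _ finite_grid, where N = N and m = m]
    unfolding Bad2_def SM_def \<eta> pd by blast
  also have "\<dots> \<le> real (card (lattice_net n L \<rho>)) * real (card (grid \<kappa> n)) * exp (- \<eta> * real m / 4)
      * real (card SM)"
    using card_mono[OF finite_lattice_net, of N] unfolding N_def by (intro mult_right_mono) auto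
  finally have "real (card (Bad1 \<union> Bad2)) \<le> (2 ^ n * exp (- 8 * real m)
      + real (card (lattice_net n L \<rho>)) * real (card (grid \<kappa> n)) * exp (- \<eta> * real m / 4)) * real (card SM)"
    using card_Un_le[of Bad1 Bad2] card_bad_sign_matrices_le[of d n m] n
    unfolding Bad1_def SM_def by (simp add: algebra_simps)
  also have "\<dots> \<le> exp (- (\<eta> / 32) * real n) * real (card SM)"
    using failure_bound_le_exp[OF K(1) _ K(3) _ n(1) assms(5) L(2) large] K p
    by (intro mult_right_mono) auto
  finally have card: "real (card (Bad1 \<union> Bad2)) \<le> exp (- (\<eta> / 32) * real n) * real (card SM)" .
  have "SM \<noteq> {}" "finite SM"
    unfolding SM_def using n by (auto simp: card_slice_matrices finite_slice_matrices simp flip: card_0_eq)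
  moreover have "Bad1 \<union> Bad2 \<subseteq> SM" unfolding Bad1_def Bad2_def by auto
  ultimately have "finite (Bad1 \<union> Bad2)" "SM \<noteq> {}" "finite SM" by (auto intro: finite_subset)
  then show ?thesis
    using card_mono[OF _ sub] card unfolding random_slice_matrix_def SM_def[symmetric]
    by (simp add: measure_pmf_of_set Int_def divide_le_eq)
qed

lemma admissible_slice_constants:
  assumes "0 < p" "p \<le> 1/2"
    and \<eta>: "\<eta> = (p * (1 - p))\<^sup>2 / 10^8" and \<kappa>: "\<kappa> = \<eta> * sqrt (p * (1 - p)) / 32"
    and \<rho>: "\<rho> = \<kappa> / 40" and \<beta>: "\<beta> = \<eta>\<^sup>2 / 12288" and \<delta>: "\<delta> = (\<beta> * \<rho> / 2)\<^sup>2"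
  shows "0 < \<rho>" "\<rho> < 1" "0 < \<delta>" "\<delta> < 1" "p * \<rho> + 3 * sqrt \<delta> \<le> p / 8"
    and "2 * sqrt \<delta> * real n / \<rho> < real (nat \<lfloor>\<beta> * real n\<rfloor>) + 1"
    and "real (nat \<lfloor>\<beta> * real n\<rfloor>) \<le> \<eta>\<^sup>2 / 12288 * real n"
proof -
  note K = slice_constants_bounds[OF assms(1-4)]
  have \<beta>01: "0 < \<beta>" "\<beta> \<le> 1" using K assms(2) power_le_one[of \<eta> 2] unfolding \<beta> by auto
  show \<rho>0: "0 < \<rho>" "\<rho> < 1" using K assms(2) unfolding \<rho> by auto
  have sd: "sqrt \<delta> = \<beta> * \<rho> / 2" unfolding \<delta> using \<beta>01 \<rho>0 by simp
  have "\<beta> * \<rho> \<le> 1 * 1" using \<beta>01 \<rho>0 by (intro mult_mono) auto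
  then show "0 < \<delta>" "\<delta> < 1" unfolding \<delta> using \<beta>01 \<rho>0 by (auto simp: power_less_one_iff)
  have "\<rho> * (p + 3/2 * \<beta>) \<le> p / 2560 * 2" using K \<beta>01 \<rho>0 assms(2) unfolding \<rho>
    by (intro mult_mono) auto
  then show "p * \<rho> + 3 * sqrt \<delta> \<le> p / 8" unfolding sd using assms(1) by (simp add: algebra_simps)
  have "2 * sqrt \<delta> * real n / \<rho> = \<beta> * real n" unfolding sd using \<rho>0 by simp
  then show "2 * sqrt \<delta> * real n / \<rho> < real (nat \<lfloor>\<beta> * real n\<rfloor>) + 1" using \<beta>01 by linarith
  show "real (nat \<lfloor>\<beta> * real n\<rfloor>) \<le> \<eta>\<^sup>2 / 12288 * real n"
    using of_nat_floor[of "\<beta> * real n"] \<beta>01 unfolding \<beta> by simp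
qed

theorem proposition3p1:
  fixes p :: real
  assumes "0 < p" and "p \<le> 1/2"
  shows "\<exists>C c \<delta> \<rho> :: real. 0 < C \<and> C < 1 \<and> 0 < c \<and> c < 1 \<and> 0 < \<delta> \<and> \<delta> < 1 \<and>
    0 < \<rho> \<and> \<rho> < 1 \<and>
    (\<exists>N0::nat. \<forall>n d m :: nat. N0 \<le> n \<longrightarrow> N0 \<le> d \<longrightarrow> real d = p * real n \<longrightarrow>
       real n / 2 \<le> real m \<longrightarrow> m \<le> n \<longrightarrow>
       measure_pmf.prob (random_slice_matrix m n d)
         {M. (INF v\<in>almost_const \<delta> \<rho> n. matvec_norm m n M v) \<le> c * sqrt (p * real n)}
       \<le> exp (- C * real n))"
proof -
  define \<eta> where "\<eta> = (p * (1 - p))\<^sup>2 / 10^8"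
  define \<kappa> where "\<kappa> = \<eta> * sqrt (p * (1 - p)) / 32"
  define \<rho> where "\<rho> = \<kappa> / 40"
  define \<beta> where "\<beta> = \<eta>\<^sup>2 / 12288"
  define \<delta> where "\<delta> = (\<beta> * \<rho> / 2)\<^sup>2"
  define N0 where "N0 = max 2 (max (nat \<lceil>32 / \<eta>\<rceil>) (nat \<lceil>10240 / (\<eta>\<^sup>2 * \<kappa>)\<rceil>))"
  note K = slice_constants_bounds[OF assms \<eta>_def \<kappa>_def]
  note A = admissible_slice_constants[OF assms \<eta>_def \<kappa>_def \<rho>_def \<beta>_def \<delta>_def]
  have "measure_pmf.prob (random_slice_matrix m n d)
      {M. (INF v\<in>almost_const \<delta> \<rho> n. matvec_norm m n M v) \<le> \<kappa> / 4 * sqrt (p * real n)}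
    \<le> exp (- (\<eta> / 32) * real n)"
    if "N0 \<le> n" "N0 \<le> d" "real d = p * real n" "real n / 2 \<le> real m" for n d m
    using that A K unfolding N0_def
    by (intro prob_small_inf_matvec_le[OF assms _ _ _ \<eta>_def \<kappa>_def]) (auto simp: \<rho>_def)
  then show ?thesis
    using A K assms by (intro exI[of _ "\<eta> / 32"] exI[of _ "\<kappa> / 4"] exI[of _ \<delta>] exI[of _ \<rho>] exI[of _ N0]) auto
qed

end
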